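(* There exists a function $\chi:\partial\Delta\times\mathbb R_{\ge0}\times A\to\mathbb R$, $(s,\gamma,\omega)\mapsto\chi(s,\gamma,\omega)$, which is smooth with respect to $(s,\gamma)$ and affine linear with respect to $\omega$ (for fixed $(s,\gamma)$, $\omega\mapsto\chi(s,\gamma,\omega)$ is the restriction to $A$ of an affine function on $M$), and satisfies: (i) $\chi(s,0,\omega)\equiv0$ and $\chi(s,\gamma,0)\equiv\gamma\cdot\lambda(0)$; (ii) as $\gamma\to\infty$, the function $s\mapsto e^{\gamma\lambda(\omega)-\chi(s,\gamma,\omega)}$ converges uniformly to $\rho_\omega(s)$, for every $\omega\in A$.
   Context: $M\cong\mathbb R^N$ with lattice $\mathbb Z^N$ and origin $0$; $\Delta\subset M$ an $N$-dimensional convex lattice polytope which is reflexive ($0$ interior, polar polytope $\{u:\langle u,m\rangle\ge-1\ \forall m\in\Delta\}$ integral) and nonsingular (each vertex lies on exactly $N$ edges whose lattice points generate $\mathbb Z^N$). $A\subset\Delta\cap\mathbb Z^N$ contains $0$ and all vertices of $\Delta$. $T$ is a coherent central triangulation of $\Delta$ with vertices in $A$ (central: $0$ is a vertex of every maximal simplex). Call $\psi:\Delta\to\mathbb R$ convex if $\psi(tx+(1-t)y)\ge t\psi(x)+(1-t)\psi(y)$. $\lambda:A\to\mathbb Z$ is fixed such that the $T$-piecewise linear function $\psi_\lambda$ interpolating $\lambda$ at the vertices of $T$ is convex with the maximal simplices of $T$ as its maximal domains of linearity, and $\psi_\lambda(\omega)\ge\lambda(\omega)$ for all $\omega\in A$,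 with equality exactly at the vertices of $T$. $\partial T$ is the triangulation of $\partial\Delta$ induced by $T$, $O(\tau)$ the barycenter of $\tau\in\partial T$. $V^0_\tau$ is the union of the simplices of the second barycentric subdivision of $\partial T$ having $O(\tau)$ as a vertex; $V_\tau\supset V^0_\tau$ is a small open neighbourhood in $\partial\Delta$ chosen so that $V_\tau\cap V_{\tau'}\ne\emptyset$ iff $\tau\subseteq\tau'$ or $\tau'\subseteq\tau$; $W_\tau:=\overline{V_\tau}\setminus\bigcup_{\tau'\supsetneq\tau}V_{\tau'}$. $\{\rho^0_\tau\}_{\tau\in\partial T}$ is a smooth partition of unity on $\partial\Delta$ subordinate to $\{V_\tau\}$. For a vertex $\omega$ of $\partial T$, $\rho_\omega:=\sum_{\tau\ni\omega}\rho^0_\tau$; $\rho_0\equiv1$; $\rho_\omega\equiv0$ for $\omega\in A$ not a vertex of $T$. *)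

theory Defs
  imports "HOL-Analysis.Analysis"
begin

definition lattice_point :: "real^'n \<Rightarrow> bool" where
  "lattice_point x \<longleftrightarrow> (\<forall>i. x $ i \<in> \<int>)"

definition lattice_polytope :: "(real^'n) set \<Rightarrow> bool" where
  "lattice_polytope P \<longleftrightarrow>
     (\<exists>V. finite V \<and> (\<forall>v\<in>V. lattice_point v) \<and> P = convex hull V)"

text \<open>Polar polytope, with the dual space identified with M via the standard
  inner product (so that the dual lattice is again the integer lattice).\<close>
definition polar :: "(real^'n) set \<Rightarrow> (real^'n) set" where
  "polar P = {u. \<forall>m\<in>P. u \<bullet> m \<ge> -1}"

definition reflexive_polytope :: "(real^'n) set \<Rightarrow> bool" where
  "reflexive_polytope P \<longleftrightarrow>
     lattice_polytope P \<and> 0 \<in> interior P \<and> lattice_polytope (polar P)"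

definition int_span :: "(real^'n) set \<Rightarrow> (real^'n) set" where
  "int_span S = {\<Sum>x\<in>F. of_int (c x) *\<^sub>R x | F c. finite F \<and> F \<subseteq> S}"

definition is_edge_of :: "(real^'n) set \<Rightarrow> (real^'n) set \<Rightarrow> bool" where
  "is_edge_of E P \<longleftrightarrow> E face_of P \<and> aff_dim E = 1"

definition nonsingular_polytope :: "(real^'n) set \<Rightarrow> bool" where
  "nonsingular_polytope P \<longleftrightarrow>
     (\<forall>v. v extreme_point_of P \<longrightarrow>
        card {E. is_edge_of E P \<and> v \<in> E} = CARD('n) \<and>
        {z. lattice_point z} \<subseteq>
          int_span {w - v | w E. is_edge_of E P \<and> v \<in> E \<and> w \<in> E \<and> lattice_point w})"

text \<open>A triangulation is given as a set of simplices, each represented by its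
  (affinely independent) vertex set.\<close>
definition triangulation :: "(real^'n) set set \<Rightarrow> (real^'n) set \<Rightarrow> (real^'n) set \<Rightarrow> bool" where
  "triangulation T P A \<longleftrightarrow>
     finite T \<and>
     (\<forall>S\<in>T. S \<noteq> {} \<and> S \<subseteq> A \<and> \<not> affine_dependent S) \<and>
     (\<forall>S\<in>T. \<forall>S'. S' \<noteq> {} \<and> S' \<subseteq> S \<longrightarrow> S' \<in> T) \<and>
     \<Union>((\<lambda>S. convex hull S) ` T) = P \<and>
     (\<forall>S\<in>T. \<forall>S'\<in>T. convex hull S \<inter> convex hull S' = convex hull (S \<inter> S'))"

definition max_simplex :: "(real^'n) set set \<Rightarrow> (real^'n) set \<Rightarrow> bool" where
  "max_simplex T S \<longleftrightarrow> S \<in> T \<and> (\<nexists>S'. S' \<in> T \<and> S \<subset> S')"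

definition tri_vertices :: "(real^'n) set set \<Rightarrow> (real^'n) set" where
  "tri_vertices T = \<Union>T"

definition central :: "(real^'n) set set \<Rightarrow> bool" where
  "central T \<longleftrightarrow> (\<forall>S. max_simplex T S \<longrightarrow> 0 \<in> S)"

definition affine_on :: "(real^'n) set \<Rightarrow> (real^'n \<Rightarrow> real) \<Rightarrow> bool" where
  "affine_on C h \<longleftrightarrow> (\<exists>a b. \<forall>x\<in>C. h x = a \<bullet> x + b)"

definition max_linearity_domain ::
    "(real^'n) set \<Rightarrow> (real^'n \<Rightarrow> real) \<Rightarrow> (real^'n) set \<Rightarrow> bool" where
  "max_linearity_domain P h C \<longleftrightarrow>
     convex C \<and> C \<subseteq> P \<and> affine_on C h \<and>
     (\<forall>C'. convex C' \<and> C \<subseteq> C' \<and> C' \<subseteq> P \<and> affine_on C' h \<longrightarrow> C' = C)"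

definition linearity_domains_are_max_simplices ::
    "(real^'n) set set \<Rightarrow> (real^'n) set \<Rightarrow> (real^'n \<Rightarrow> real) \<Rightarrow> bool" where
  "linearity_domains_are_max_simplices T P h \<longleftrightarrow>
     (\<forall>C. max_linearity_domain P h C \<longleftrightarrow> (\<exists>S. max_simplex T S \<and> C = convex hull S))"

text \<open>"Convex" in the sense of the paper (psi(tx+(1-t)y) >= t psi x + (1-t) psi y)
  is concave_on in the library's terminology.\<close>
definition coherent :: "(real^'n) set set \<Rightarrow> (real^'n) set \<Rightarrow> bool" where
  "coherent T P \<longleftrightarrow>
     (\<exists>h. (\<forall>S\<in>T. affine_on (convex hull S) h) \<and> concave_on P h \<and>
          linearity_domains_are_max_simplices T P h)"

definition pl_interpolates ::
    "(real^'n) set set \<Rightarrow> (real^'n \<Rightarrow> real) \<Rightarrow> (real^'n \<Rightarrow> real) \<Rightarrow> bool" where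
  "pl_interpolates T l h \<longleftrightarrow>
     (\<forall>S\<in>T. \<forall>c. (\<forall>v\<in>S. 0 \<le> c v) \<and> sum c S = 1 \<longrightarrow>
        h (\<Sum>v\<in>S. c v *\<^sub>R v) = (\<Sum>v\<in>S. c v * l v))"

definition boundary_tri :: "(real^'n) set set \<Rightarrow> (real^'n) set \<Rightarrow> (real^'n) set set" where
  "boundary_tri T P = {S\<in>T. convex hull S \<subseteq> frontier P}"

definition barycenter :: "(real^'n) set \<Rightarrow> real^'n" where
  "barycenter S = (1 / real (card S)) *\<^sub>R (\<Sum>v\<in>S. v)"

definition chain_in :: "'a set set \<Rightarrow> 'a set set \<Rightarrow> bool" where
  "chain_in K C \<longleftrightarrow> C \<noteq> {} \<and> finite C \<and> C \<subseteq> K \<and>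
     (\<forall>X\<in>C. \<forall>Y\<in>C. X \<subseteq> Y \<or> Y \<subseteq> X)"

definition barycentric_subdivision :: "(real^'n) set set \<Rightarrow> (real^'n) set set" where
  "barycentric_subdivision K = {barycenter ` C | C. chain_in K C}"

text \<open>V^0_tau: union of the simplices of the second barycentric subdivision of
  the boundary triangulation having O(tau) as a vertex.\<close>
definition V0 :: "(real^'n) set set \<Rightarrow> (real^'n) set \<Rightarrow> (real^'n) set \<Rightarrow> (real^'n) set" where
  "V0 T P \<tau> = \<Union>{convex hull Q | Q. Q \<in> barycentric_subdivision
        (barycentric_subdivision (boundary_tri T P)) \<and> barycenter \<tau> \<in> Q}"

fun Ck_on :: "nat \<Rightarrow> 'a::real_normed_vector set \<Rightarrow> ('a \<Rightarrow> real) \<Rightarrow> bool" where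
  "Ck_on 0 U f \<longleftrightarrow> continuous_on U f"
| "Ck_on (Suc k) U f \<longleftrightarrow>
     (\<exists>f'. (\<forall>x\<in>U. (f has_derivative f' x) (at x)) \<and> (\<forall>v. Ck_on k U (\<lambda>x. f' x v)))"

definition smooth_on :: "'a::real_normed_vector set \<Rightarrow> ('a \<Rightarrow> real) \<Rightarrow> bool" where
  "smooth_on S f \<longleftrightarrow>
     (\<exists>U g. open U \<and> S \<subseteq> U \<and> (\<forall>k. Ck_on k U g) \<and> (\<forall>x\<in>S. g x = f x))"

definition rho :: "(real^'n) set set \<Rightarrow> (real^'n) set \<Rightarrow> ((real^'n) set \<Rightarrow> real^'n \<Rightarrow> real)
    \<Rightarrow> real^'n \<Rightarrow> real^'n \<Rightarrow> real" where
  "rho T P rho0 \<omega> s =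
     (if \<omega> = 0 then 1
      else if \<omega> \<in> tri_vertices (boundary_tri T P)
      then (\<Sum>\<tau>\<in>{\<tau>\<in>boundary_tri T P. \<omega> \<in> \<tau>}. rho0 \<tau> s)
      else 0)"

end

theory Submission
  imports Defs "HOL-Real_Asymp.Real_Asymp"
begin

text \<open>
  On the cone over a maximal simplex \<open>S \<ni> 0\<close> the concave function \<open>\<psi>\<close> is affine with some slope
  \<open>u\<^sub>S\<close>; as \<open>conv S\<close> is a maximal domain of linearity, \<open>\<lambda>(0) + \<langle>u\<^sub>S, \<omega>\<rangle>\<close> exceeds \<open>\<lambda>(\<omega>)\<close> by a
  uniform gap at every \<open>\<omega> \<in> A\<close> outside \<open>S\<close>.

  For fixed \<open>s, \<gamma>\<close>, \<open>\<chi>(s, \<gamma>, \<cdot>)\<close> is a weighted average, over the maximal simplices \<open>S\<close>, of the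
  affine function with value \<open>\<gamma>\<lambda>(0)\<close> at \<open>0\<close> and \<open>\<gamma>\<lambda>(v) - ln \<rho>\<^sub>v(s)\<close> at the other vertices \<open>v\<close>
  of \<open>S\<close>. The weight of \<open>S\<close> is proportional to \<open>exp(-\<gamma>\<^sup>2 m\<^sub>S(s))\<close>, where \<open>m\<^sub>S(s)\<close> is the total
  mass of the \<open>\<rho>\<^sup>0\<^sub>\<tau>(s)\<close> with \<open>\<tau> \<not>\<subseteq> S\<close>, and \<open>ln r\<close> is replaced by the smooth
  \<open>ln (r + (1 - r) exp(-\<epsilon>\<gamma>)) \<ge> -\<epsilon>\<gamma>\<close>. Then \<open>\<gamma>\<lambda>(\<omega>) - \<chi>\<close> is a convex combination of exponents
  which equal this softened \<open>ln \<rho>\<^sub>\<omega>(s)\<close> for the simplices containing \<open>\<omega>\<close> and, thanks to the gap,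
  are below \<open>-\<epsilon>\<gamma>\<close> for the others; the latter have weight at most \<open>exp(-\<gamma>\<^sup>2 \<rho>\<^sub>\<omega>(s))\<close>.
  Hence \<open>|exp(\<gamma>\<lambda>(\<omega>) - \<chi>) - \<rho>\<^sub>\<omega>(s)| \<le> exp(-\<epsilon>\<gamma>) + C/\<gamma>\<close> uniformly in \<open>s\<close>.
\<close>

section \<open>Smooth functions\<close>

lemma Ck_on_SucI:
  "(\<And>x. x \<in> U \<Longrightarrow> (f has_derivative f' x) (at x)) \<Longrightarrow> (\<And>v. Ck_on k U (\<lambda>x. f' x v)) \<Longrightarrow>
    Ck_on (Suc k) U f"
  by auto

lemma Ck_on_Suc_imp_Ck_on: "Ck_on (Suc k) U f \<Longrightarrow> Ck_on k U f"
proof (induction k arbitrary: f)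
  case 0
  then obtain f' where "\<forall>x\<in>U. (f has_derivative f' x) (at x)" by auto
  then show ?case
    by (auto intro!: has_derivative_continuous continuous_at_imp_continuous_on)
next
  case (Suc k)
  then show ?case by auto
qed

lemma Ck_on_const: "Ck_on k U (\<lambda>x. c)"
proof (induction k arbitrary: c)
  case (Suc k)
  show ?case by (rule Ck_on_SucI[where f' = "\<lambda>x v. 0"]) (auto simp: Suc.IH)
qed simp

lemma Ck_on_bounded_linear: "bounded_linear l \<Longrightarrow> Ck_on k U l"
proof (induction k)
  case 0
  then show ?case by (simp add: linear_continuous_on)
next
  case (Suc k)
  show ?case
    by (rule Ck_on_SucI[where f' = "\<lambda>x. l"])
      (auto simp: Ck_on_const bounded_linear.has_derivative[OF Suc.prems has_derivative_ident])
qed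

lemma Ck_on_subset: "Ck_on k U f \<Longrightarrow> V \<subseteq> U \<Longrightarrow> Ck_on k V f"
proof (induction k arbitrary: f)
  case 0
  then show ?case by (auto intro: continuous_on_subset)
next
  case (Suc k)
  obtain f' where "\<And>x. x \<in> U \<Longrightarrow> (f has_derivative f' x) (at x)" "\<And>v. Ck_on k U (\<lambda>x. f' x v)"
    using Suc.prems(1) by auto
  then show ?case using Suc by (intro Ck_on_SucI[where f' = f']) auto
qed

lemma Ck_on_add: "Ck_on k U f \<Longrightarrow> Ck_on k U g \<Longrightarrow> Ck_on k U (\<lambda>x. f x + g x)"
proof (induction k arbitrary: f g)
  case 0
  then show ?case by (auto intro: continuous_on_add)
next
  case (Suc k)
  obtain f' where f': "\<And>x. x \<in> U \<Longrightarrow> (f has_derivative f' x) (at x)" "\<And>v. Ck_on k U (\<lambda>x. f' x v)"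
    using Suc.prems(1) by auto
  obtain g' where g': "\<And>x. x \<in> U \<Longrightarrow> (g has_derivative g' x) (at x)" "\<And>v. Ck_on k U (\<lambda>x. g' x v)"
    using Suc.prems(2) by auto
  show ?case
    by (rule Ck_on_SucI[where f' = "\<lambda>x v. f' x v + g' x v"])
      (use f' g' Suc.IH in \<open>auto intro: has_derivative_add\<close>)
qed

lemma Ck_on_mult: "Ck_on k U f \<Longrightarrow> Ck_on k U g \<Longrightarrow> Ck_on k U (\<lambda>x. f x * g x)"
proof (induction k arbitrary: f g)
  case 0
  then show ?case by (auto intro: continuous_on_mult)
next
  case (Suc k)
  obtain f' where f': "\<And>x. x \<in> U \<Longrightarrow> (f has_derivative f' x) (at x)" "\<And>v. Ck_on k U (\<lambda>x. f' x v)"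
    using Suc.prems(1) by auto
  obtain g' where g': "\<And>x. x \<in> U \<Longrightarrow> (g has_derivative g' x) (at x)" "\<And>v. Ck_on k U (\<lambda>x. g' x v)"
    using Suc.prems(2) by auto
  have f: "Ck_on k U f" and g: "Ck_on k U g"
    using Suc.prems Ck_on_Suc_imp_Ck_on by blast+
  show ?case
  proof (rule Ck_on_SucI[where f' = "\<lambda>x v. f x * g' x v + f' x v * g x"])
    show "((\<lambda>x. f x * g x) has_derivative (\<lambda>v. f x * g' x v + f' x v * g x)) (at x)" if "x \<in> U" for x
      using f'(1)[OF that] g'(1)[OF that] by (rule has_derivative_mult)
    show "Ck_on k U (\<lambda>x. f x * g' x v + f' x v * g x)" for v
      by (intro Ck_on_add Suc.IH f g f'(2) g'(2))
  qed
qed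

lemma Ck_on_cmult: "Ck_on k U f \<Longrightarrow> Ck_on k U (\<lambda>x. c * f x)"
  by (rule Ck_on_mult[OF Ck_on_const])

lemma Ck_on_diff: "Ck_on k U f \<Longrightarrow> Ck_on k U g \<Longrightarrow> Ck_on k U (\<lambda>x. f x - g x)"
  using Ck_on_add[OF _ Ck_on_cmult[of k U g "-1"], of f] by simp

lemma Ck_on_exp: "Ck_on k U f \<Longrightarrow> Ck_on k U (\<lambda>x. exp (f x))"
proof (induction k arbitrary: f)
  case 0
  then show ?case by (auto intro: continuous_on_exp)
next
  case (Suc k)
  obtain f' where f': "\<And>x. x \<in> U \<Longrightarrow> (f has_derivative f' x) (at x)" "\<And>v. Ck_on k U (\<lambda>x. f' x v)"
    using Suc.prems by auto
  show ?case
  proof (rule Ck_on_SucI[where f' = "\<lambda>x v. exp (f x) * f' x v"])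
    show "((\<lambda>x. exp (f x)) has_derivative (\<lambda>v. exp (f x) * f' x v)) (at x)" if "x \<in> U" for x
      using f'(1)[OF that] by (auto intro!: derivative_eq_intros)
    show "Ck_on k U (\<lambda>x. exp (f x) * f' x v)" for v
      using Suc.IH[OF Ck_on_Suc_imp_Ck_on[OF Suc.prems]] f'(2) by (rule Ck_on_mult)
  qed
qed

lemma Ck_on_inverse:
  "Ck_on k U f \<Longrightarrow> (\<And>x. x \<in> U \<Longrightarrow> f x \<noteq> 0) \<Longrightarrow> Ck_on k U (\<lambda>x. inverse (f x))"
proof (induction k arbitrary: f)
  case 0
  then show ?case by (auto intro: continuous_on_inverse)
next
  case (Suc k)
  obtain f' where f': "\<And>x. x \<in> U \<Longrightarrow> (f has_derivative f' x) (at x)" "\<And>v. Ck_on k U (\<lambda>x. f' x v)"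
    using Suc.prems(1) by auto
  have inv: "Ck_on k U (\<lambda>x. inverse (f x))"
    using Suc.IH[OF Ck_on_Suc_imp_Ck_on[OF Suc.prems(1)]] Suc.prems(2) by blast
  show ?case
  proof (rule Ck_on_SucI[where f' = "\<lambda>x v. - (inverse (f x) * f' x v * inverse (f x))"])
    show "((\<lambda>x. inverse (f x)) has_derivative
        (\<lambda>v. - (inverse (f x) * f' x v * inverse (f x)))) (at x)" if "x \<in> U" for x
      using f'(1)[OF that] Suc.prems(2)[OF that] by (auto intro!: derivative_eq_intros)
    show "Ck_on k U (\<lambda>x. - (inverse (f x) * f' x v * inverse (f x)))" for v
      using Ck_on_cmult[OF Ck_on_mult[OF Ck_on_mult[OF inv f'(2)] inv], of "-1"] by simp
  qed
qed

lemma Ck_on_ln: "Ck_on k U f \<Longrightarrow> (\<And>x. x \<in> U \<Longrightarrow> 0 < f x) \<Longrightarrow> Ck_on k U (\<lambda>x. ln (f x))"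
proof (induction k arbitrary: f)
  case 0
  then show ?case by (auto intro!: continuous_on_ln dest: less_imp_neq[symmetric])
next
  case (Suc k)
  obtain f' where f': "\<And>x. x \<in> U \<Longrightarrow> (f has_derivative f' x) (at x)" "\<And>v. Ck_on k U (\<lambda>x. f' x v)"
    using Suc.prems(1) by auto
  have inv: "Ck_on k U (\<lambda>x. inverse (f x))"
    using Ck_on_Suc_imp_Ck_on[OF Suc.prems(1)] Suc.prems(2)
    by (auto intro!: Ck_on_inverse dest: less_imp_neq[symmetric])
  show ?case
  proof (rule Ck_on_SucI[where f' = "\<lambda>x v. inverse (f x) * f' x v"])
    show "((\<lambda>x. ln (f x)) has_derivative (\<lambda>v. inverse (f x) * f' x v)) (at x)" if "x \<in> U" for x
      using f'(1)[OF that] Suc.prems(2)[OF that]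
      by (auto intro!: derivative_eq_intros simp: field_simps)
    show "Ck_on k U (\<lambda>x. inverse (f x) * f' x v)" for v
      using inv f'(2) by (rule Ck_on_mult)
  qed
qed

lemma Ck_on_compose_fst:
  fixes g :: "'a::real_normed_vector \<Rightarrow> real"
  assumes "Ck_on k U g"
  shows "Ck_on k (U \<times> (V :: 'b::real_normed_vector set)) (\<lambda>p. g (fst p))"
  using assms
proof (induction k arbitrary: g)
  case 0
  then show ?case
    by (auto intro!: continuous_on_compose2[of U g _ fst] continuous_intros)
next
  case (Suc k)
  obtain g' where g': "\<And>x. x \<in> U \<Longrightarrow> (g has_derivative g' x) (at x)" "\<And>v. Ck_on k U (\<lambda>x. g' x v)"
    using Suc.prems by auto
  show ?case
  proof (rule Ck_on_SucI[where f' = "\<lambda>p v. g' (fst p) (fst v)"])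
    show "((\<lambda>p. g (fst p)) has_derivative (\<lambda>v. g' (fst p) (fst v))) (at p)" if "p \<in> U \<times> V" for p
      using that has_derivative_compose[OF has_derivative_fst[OF has_derivative_ident] g'(1)]
      by auto
    show "Ck_on k (U \<times> V) (\<lambda>p. g' (fst p) (fst v))" for v
      using g'(2) by (rule Suc.IH)
  qed
qed

lemma smooth_onI:
  "open U \<Longrightarrow> S \<subseteq> U \<Longrightarrow> (\<And>k. Ck_on k U g) \<Longrightarrow> (\<And>x. x \<in> S \<Longrightarrow> g x = f x) \<Longrightarrow> smooth_on S f"
  unfolding smooth_on_def by blast

lemma smooth_on_extension_into:
  assumes "smooth_on S f" "open W" "\<And>x. x \<in> S \<Longrightarrow> f x \<in> W"
  obtains U g where "open U" "S \<subseteq> U" "\<And>k. Ck_on k U g" "\<And>x. x \<in> S \<Longrightarrow> g x = f x"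
    "\<And>x. x \<in> U \<Longrightarrow> g x \<in> W"
proof -
  obtain U g where U: "open U" "S \<subseteq> U" "\<And>k. Ck_on k U g" "\<And>x. x \<in> S \<Longrightarrow> g x = f x"
    using assms(1) unfolding smooth_on_def by blast
  have "continuous_on U g" using U(3)[of 0] by simp
  then have "open (U \<inter> g -` W)" using U(1) assms(2) by (rule continuous_open_preimage)
  moreover have "S \<subseteq> U \<inter> g -` W" using U(2,4) assms(3) by auto
  moreover have "Ck_on k (U \<inter> g -` W) g" for k
    using U(3) by (rule Ck_on_subset) blast
  ultimately show ?thesis using U(4) by (rule that) auto
qed

lemma smooth_on_const: "smooth_on S (\<lambda>x. c)"
  by (rule smooth_onI[of UNIV]) (auto intro: Ck_on_const)

lemma smooth_on_binop:
  fixes S :: "'a::real_normed_vector set"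
  assumes f: "smooth_on S f" and g: "smooth_on S g"
    and op: "\<And>k (U :: 'a set) f g. Ck_on k U f \<Longrightarrow> Ck_on k U g \<Longrightarrow> Ck_on k U (\<lambda>x. h (f x) (g x))"
  shows "smooth_on S (\<lambda>x. h (f x) (g x))"
proof -
  obtain U1 g1 where 1: "open U1" "S \<subseteq> U1" "\<And>k. Ck_on k U1 g1" "\<And>x. x \<in> S \<Longrightarrow> g1 x = f x"
    using f unfolding smooth_on_def by blast
  obtain U2 g2 where 2: "open U2" "S \<subseteq> U2" "\<And>k. Ck_on k U2 g2" "\<And>x. x \<in> S \<Longrightarrow> g2 x = g x"
    using g unfolding smooth_on_def by blast
  have "Ck_on k (U1 \<inter> U2) (\<lambda>x. h (g1 x) (g2 x))" for k
    by (rule op) (use Ck_on_subset 1(3) 2(3) in blast)+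
  then show ?thesis
    using 1 2 by (intro smooth_onI[of "U1 \<inter> U2" _ "\<lambda>x. h (g1 x) (g2 x)"]) auto
qed

lemma smooth_on_add: "smooth_on S f \<Longrightarrow> smooth_on S g \<Longrightarrow> smooth_on S (\<lambda>x. f x + g x)"
  by (rule smooth_on_binop[where h = "(+)"]) (auto intro: Ck_on_add)

lemma smooth_on_mult: "smooth_on S f \<Longrightarrow> smooth_on S g \<Longrightarrow> smooth_on S (\<lambda>x. f x * g x)"
  by (rule smooth_on_binop[where h = "(*)"]) (auto intro: Ck_on_mult)

lemma smooth_on_diff: "smooth_on S f \<Longrightarrow> smooth_on S g \<Longrightarrow> smooth_on S (\<lambda>x. f x - g x)"
  by (rule smooth_on_binop[where h = "(-)"]) (auto intro: Ck_on_diff)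

lemma smooth_on_minus: "smooth_on S f \<Longrightarrow> smooth_on S (\<lambda>x. - f x)"
  using smooth_on_diff[OF smooth_on_const, of S f 0] by simp

lemma smooth_on_sum:
  "finite I \<Longrightarrow> (\<And>i. i \<in> I \<Longrightarrow> smooth_on S (f i)) \<Longrightarrow> smooth_on S (\<lambda>x. \<Sum>i\<in>I. f i x)"
  by (induction I rule: finite_induct) (auto intro: smooth_on_add smooth_on_const)

lemma smooth_on_exp:
  assumes "smooth_on S f"
  shows "smooth_on S (\<lambda>x. exp (f x))"
proof -
  obtain U g where "open U" "S \<subseteq> U" "\<And>k. Ck_on k U g" "\<And>x. x \<in> S \<Longrightarrow> g x = f x"
    using assms unfolding smooth_on_def by blast
  then show ?thesis by (intro smooth_onI[of U _ "\<lambda>x. exp (g x)"] Ck_on_exp) auto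
qed

lemma smooth_on_inverse:
  assumes "smooth_on S f" "\<And>x. x \<in> S \<Longrightarrow> f x \<noteq> 0"
  shows "smooth_on S (\<lambda>x. inverse (f x))"
proof -
  obtain U g where "open U" "S \<subseteq> U" "\<And>k. Ck_on k U g" "\<And>x. x \<in> S \<Longrightarrow> g x = f x"
    "\<And>x. x \<in> U \<Longrightarrow> g x \<in> - {0}"
    using smooth_on_extension_into[OF assms(1) open_Compl[OF closed_singleton]] assms(2) by blast
  then show ?thesis by (intro smooth_onI[of U _ "\<lambda>x. inverse (g x)"] Ck_on_inverse) auto
qed

lemma smooth_on_divide:
  "smooth_on S f \<Longrightarrow> smooth_on S g \<Longrightarrow> (\<And>x. x \<in> S \<Longrightarrow> g x \<noteq> 0) \<Longrightarrow> smooth_on S (\<lambda>x. f x / g x)"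
  unfolding divide_inverse by (intro smooth_on_mult smooth_on_inverse)

lemma smooth_on_ln:
  assumes "smooth_on S f" "\<And>x. x \<in> S \<Longrightarrow> 0 < f x"
  shows "smooth_on S (\<lambda>x. ln (f x))"
proof -
  obtain U g where "open U" "S \<subseteq> U" "\<And>k. Ck_on k U g" "\<And>x. x \<in> S \<Longrightarrow> g x = f x"
    "\<And>x. x \<in> U \<Longrightarrow> g x \<in> {0<..}"
    using smooth_on_extension_into[OF assms(1) open_greaterThan] assms(2) by blast
  then show ?thesis by (intro smooth_onI[of U _ "\<lambda>x. ln (g x)"] Ck_on_ln) auto
qed

lemma smooth_on_compose_fst:
  assumes "smooth_on S f"
  shows "smooth_on (S \<times> T) (\<lambda>p. f (fst p))"
proof -
  obtain U g where "open U" "S \<subseteq> U" "\<And>k. Ck_on k U g" "\<And>x. x \<in> S \<Longrightarrow> g x = f x"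
    using assms unfolding smooth_on_def by blast
  then show ?thesis
    by (intro smooth_onI[of "U \<times> UNIV" _ "\<lambda>p. g (fst p)"] Ck_on_compose_fst)
      (auto simp: open_Times)
qed

lemma smooth_on_snd: "smooth_on S snd"
  by (rule smooth_onI[of UNIV]) (auto intro: Ck_on_bounded_linear bounded_linear_snd)

section \<open>The smoothed tropical approximation\<close>

definition soft_ln :: "real \<Rightarrow> real \<Rightarrow> real \<Rightarrow> real" where
  "soft_ln \<epsilon> \<gamma> r = ln (r + (1 - r) * exp (-(\<epsilon> * \<gamma>)))"

lemma soft_ln_arg_pos:
  fixes r \<epsilon> \<gamma> :: real
  assumes "0 \<le> r" "r \<le> 1"
  shows "0 < r + (1 - r) * exp (-(\<epsilon> * \<gamma>))"
proof (cases "r = 1")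
  case False
  with assms have "0 < 1 - r" by simp
  then have "0 < (1 - r) * exp (-(\<epsilon> * \<gamma>))" by simp
  with assms show ?thesis by linarith
qed simp

lemma exp_soft_ln:
  "0 \<le> r \<Longrightarrow> r \<le> 1 \<Longrightarrow> exp (soft_ln \<epsilon> \<gamma> r) = r + (1 - r) * exp (-(\<epsilon> * \<gamma>))"
  unfolding soft_ln_def using soft_ln_arg_pos by simp

lemma soft_ln_zero: "soft_ln \<epsilon> 0 r = 0"
  by (simp add: soft_ln_def)

lemma soft_ln_bounds:
  assumes "0 \<le> r" "r \<le> 1" "0 \<le> \<epsilon> * \<gamma>"
  shows "-(\<epsilon> * \<gamma>) \<le> soft_ln \<epsilon> \<gamma> r" "soft_ln \<epsilon> \<gamma> r \<le> 0"
proof -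
  define E where "E = exp (-(\<epsilon> * \<gamma>))"
  have E: "0 < E" "E \<le> 1" using assms(3) by (auto simp: E_def)
  have "r * E \<le> r" using assms(1) E by (simp add: mult_left_le)
  then have "E \<le> r + (1 - r) * E" by (simp add: algebra_simps)
  moreover have "(1 - r) * E \<le> 1 - r" using assms(2) E by (intro mult_left_le) auto
  then have "r + (1 - r) * E \<le> 1" by simp
  ultimately have "exp (-(\<epsilon> * \<gamma>)) \<le> exp (soft_ln \<epsilon> \<gamma> r)" "exp (soft_ln \<epsilon> \<gamma> r) \<le> exp 0"
    using exp_soft_ln[OF assms(1,2)] by (simp_all add: E_def)
  then show "-(\<epsilon> * \<gamma>) \<le> soft_ln \<epsilon> \<gamma> r" "soft_ln \<epsilon> \<gamma> r \<le> 0" by simp_all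
qed

lemma convex_combination_near:
  fixes \<theta> L :: "'i \<Rightarrow> real" and c K \<eta> :: real
  assumes "finite I" "\<And>i. i \<in> I \<Longrightarrow> 0 \<le> \<theta> i" "sum \<theta> I = 1" "0 \<le> \<eta>"
    and L: "\<And>i. i \<in> I \<Longrightarrow> c - K \<le> L i \<and> L i \<le> c"
    and small: "\<And>i. i \<in> I \<Longrightarrow> L i \<noteq> c \<Longrightarrow> \<theta> i \<le> \<eta>"
  shows "c - card I * \<eta> * K \<le> (\<Sum>i\<in>I. \<theta> i * L i)" "(\<Sum>i\<in>I. \<theta> i * L i) \<le> c"
proof -
  have sum_eq: "(\<Sum>i\<in>I. \<theta> i * L i) = c + (\<Sum>i\<in>I. \<theta> i * (L i - c))"
    using assms(3) by (simp add: right_diff_distrib sum_subtractf flip: sum_distrib_right)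
  have "-(\<eta> * K) \<le> \<theta> i * (L i - c)" if i: "i \<in> I" for i
  proof -
    have K: "0 \<le> K" using L[OF i] by simp
    show ?thesis
    proof (cases "L i = c")
      case False
      have "\<theta> i * K \<le> \<eta> * K" using small[OF i False] K by (rule mult_right_mono)
      moreover have "\<theta> i * (-K) \<le> \<theta> i * (L i - c)"
        using L[OF i] assms(2)[OF i] by (intro mult_left_mono) auto
      ultimately show ?thesis by simp
    qed (use K assms(4) in simp)
  qed
  then have "(\<Sum>i\<in>I. -(\<eta> * K)) \<le> (\<Sum>i\<in>I. \<theta> i * (L i - c))" by (rule sum_mono)
  then show "c - card I * \<eta> * K \<le> (\<Sum>i\<in>I. \<theta> i * L i)" by (simp add: sum_eq)
  have "(\<Sum>i\<in>I. \<theta> i * (L i - c)) \<le> 0"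
    using assms(2) L by (intro sum_nonpos mult_nonneg_nonpos) auto
  then show "(\<Sum>i\<in>I. \<theta> i * L i) \<le> c" by (simp add: sum_eq)
qed

lemma exp_near:
  fixes x c r y e :: real
  assumes "c - y \<le> x" "x \<le> c" "r \<le> exp c" "exp c \<le> r + e" "0 \<le> r" "0 \<le> y" "0 \<le> e"
  shows "\<bar>exp x - r\<bar> \<le> e + r * y"
proof -
  have "r * (1 - y) \<le> r * exp (-y)"
    using assms(5) exp_ge_add_one_self[of "-y"] by (intro mult_left_mono) auto
  also have "\<dots> \<le> exp c * exp (-y)" using assms(3) by (intro mult_right_mono) auto
  also have "\<dots> \<le> exp x" using assms(1) by (simp flip: exp_add)
  finally have "r - exp x \<le> r * y" by (simp add: algebra_simps)
  moreover have "exp x \<le> exp c" using assms(2) by simp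
  then have "exp x - r \<le> e" using assms(4) by linarith
  ultimately show ?thesis
    unfolding abs_le_iff using mult_nonneg_nonneg[OF assms(5,6)] assms(7) by linarith
qed

lemma mult_exp_neg_le_1: "x * exp (-x) \<le> (1::real)"
proof -
  have "x \<le> exp x" using exp_ge_add_one_self[of x] by linarith
  then show ?thesis by (simp add: exp_minus field_simps)
qed

text \<open>In the application the cells are the maximal simplices of the triangulation with the apex \<open>0\<close> removed: on
  the cone over \<open>F\<close> the function \<open>\<psi>\<close> is \<open>l 0 + slope F \<bullet> x\<close>, and \<open>dual F\<close> is the basis dual
  to \<open>F\<close>. \<open>R \<omega>\<close> is the limit to be reached (\<open>\<rho>\<^sub>\<omega>\<close>) and \<open>m F s\<close> the mass at \<open>s\<close> of the
  partition functions \<open>\<rho>\<^sup>0\<^sub>\<tau>\<close> with \<open>\<tau> \<not>\<subseteq> F\<close>.\<close>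

locale cell_smoothing =
  fixes S :: "'b::real_normed_vector set"
    and A :: "'a::real_inner set"
    and cells :: "'a set set"
    and slope :: "'a set \<Rightarrow> 'a"
    and dual :: "'a set \<Rightarrow> 'a \<Rightarrow> 'a"
    and l :: "'a \<Rightarrow> real"
    and m :: "'a set \<Rightarrow> 'b \<Rightarrow> real"
    and R :: "'a \<Rightarrow> 'b \<Rightarrow> real"
  assumes finite_cells: "finite cells" and cells_nonempty: "cells \<noteq> {}"
    and finite_cell: "F \<in> cells \<Longrightarrow> finite F"
    and finite_A: "finite A"
    and dual_basis: "F \<in> cells \<Longrightarrow> v \<in> F \<Longrightarrow> w \<in> F \<Longrightarrow> dual F v \<bullet> w = (if v = w then 1 else 0)"
    and slope_on_cell: "F \<in> cells \<Longrightarrow> v \<in> F \<Longrightarrow> slope F \<bullet> v = l v - l 0"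
    and slope_off_cell: "F \<in> cells \<Longrightarrow> \<omega> \<in> A \<Longrightarrow> \<omega> \<noteq> 0 \<Longrightarrow> \<omega> \<notin> F \<Longrightarrow> l \<omega> - l 0 < slope F \<bullet> \<omega>"
    and smooth_m: "F \<in> cells \<Longrightarrow> smooth_on S (m F)"
    and smooth_R: "v \<in> \<Union>cells \<Longrightarrow> smooth_on S (R v)"
    and R_nonneg: "s \<in> S \<Longrightarrow> 0 \<le> R v s"
    and R_le_1: "s \<in> S \<Longrightarrow> R v s \<le> 1"
    and R_zero: "s \<in> S \<Longrightarrow> R 0 s = 1"
    and R_le_m: "s \<in> S \<Longrightarrow> F \<in> cells \<Longrightarrow> \<omega> \<in> A \<Longrightarrow> \<omega> \<noteq> 0 \<Longrightarrow> \<omega> \<notin> F \<Longrightarrow> R \<omega> s \<le> m F s"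
    and m_vanishes: "s \<in> S \<Longrightarrow> \<exists>G\<in>cells. m G s = 0"
begin

definition cell_weight :: "'a set \<Rightarrow> 'b \<Rightarrow> real \<Rightarrow> real" where
  "cell_weight F s \<gamma> = exp (-(\<gamma>\<^sup>2 * m F s)) / (\<Sum>G\<in>cells. exp (-(\<gamma>\<^sup>2 * m G s)))"

definition chi :: "real \<Rightarrow> 'b \<Rightarrow> real \<Rightarrow> 'a \<Rightarrow> real" where
  "chi \<epsilon> s \<gamma> \<omega> = \<gamma> * l 0 +
     (\<Sum>F\<in>cells. cell_weight F s \<gamma> *
        (\<gamma> * (slope F \<bullet> \<omega>) - (\<Sum>v\<in>F. soft_ln \<epsilon> \<gamma> (R v s) * (dual F v \<bullet> \<omega>))))"

definition cell_exponent :: "real \<Rightarrow> 'b \<Rightarrow> real \<Rightarrow> 'a \<Rightarrow> 'a set \<Rightarrow> real" where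
  "cell_exponent \<epsilon> s \<gamma> \<omega> F =
     \<gamma> * (l \<omega> - l 0 - slope F \<bullet> \<omega>) + (\<Sum>v\<in>F. soft_ln \<epsilon> \<gamma> (R v s) * (dual F v \<bullet> \<omega>))"

lemma weight_sum_pos: "0 < (\<Sum>G\<in>cells. exp (-(\<gamma>\<^sup>2 * m G s)))"
  using finite_cells cells_nonempty by (intro sum_pos) auto

lemma cell_weight_nonneg: "0 \<le> cell_weight F s \<gamma>"
  using weight_sum_pos by (simp add: cell_weight_def less_imp_le)

lemma sum_cell_weight: "(\<Sum>F\<in>cells. cell_weight F s \<gamma>) = 1"
  using weight_sum_pos[of \<gamma> s] by (simp add: cell_weight_def flip: sum_divide_distrib)

lemma cell_weight_le:
  assumes "s \<in> S"
  shows "cell_weight F s \<gamma> \<le> exp (-(\<gamma>\<^sup>2 * m F s))"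
proof -
  obtain G where G: "G \<in> cells" "m G s = 0" using m_vanishes[OF assms] by blast
  have "1 \<le> (\<Sum>G\<in>cells. exp (-(\<gamma>\<^sup>2 * m G s)))"
    using member_le_sum[OF G(1), of "\<lambda>G. exp (-(\<gamma>\<^sup>2 * m G s))"] finite_cells G(2) by simp
  then show ?thesis
    unfolding cell_weight_def by (simp add: divide_le_eq mult_le_cancel_left1)
qed

lemma chi_affine: "\<exists>a b. \<forall>\<omega>. chi \<epsilon> s \<gamma> \<omega> = a \<bullet> \<omega> + b"
proof (intro exI allI)
  show "chi \<epsilon> s \<gamma> \<omega> =
    (\<Sum>F\<in>cells. cell_weight F s \<gamma> *\<^sub>R
        (\<gamma> *\<^sub>R slope F - (\<Sum>v\<in>F. soft_ln \<epsilon> \<gamma> (R v s) *\<^sub>R dual F v))) \<bullet> \<omega> + \<gamma> * l 0" for \<omega>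
    by (simp add: chi_def inner_sum_left inner_diff_left algebra_simps)
qed

lemma chi_gamma_zero: "chi \<epsilon> s 0 \<omega> = 0"
  by (simp add: chi_def soft_ln_zero)

lemma chi_omega_zero: "chi \<epsilon> s \<gamma> 0 = \<gamma> * l 0"
  by (simp add: chi_def)

lemma chi_smooth: "smooth_on (S \<times> T) (\<lambda>p. chi \<epsilon> (fst p) (snd p) \<omega>)"
proof -
  have weight: "smooth_on (S \<times> T) (\<lambda>p. cell_weight F (fst p) (snd p))" if "F \<in> cells" for F
  proof -
    have "smooth_on (S \<times> T) (\<lambda>p. exp (-(snd p * snd p * m G (fst p))))" if "G \<in> cells" for G
      using smooth_m[OF that]
      by (intro smooth_on_exp smooth_on_minus smooth_on_mult smooth_on_snd smooth_on_compose_fst)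
    then show ?thesis
      unfolding cell_weight_def power2_eq_square
      using weight_sum_pos[unfolded power2_eq_square] \<open>F \<in> cells\<close>
      by (intro smooth_on_divide smooth_on_sum finite_cells) (auto, metis less_irrefl)
  qed
  have soft: "smooth_on (S \<times> T) (\<lambda>p. soft_ln \<epsilon> (snd p) (R v (fst p)))" if "v \<in> \<Union>cells" for v
    unfolding soft_ln_def
  proof (intro smooth_on_ln smooth_on_add smooth_on_mult smooth_on_diff smooth_on_exp
      smooth_on_minus smooth_on_const smooth_on_snd smooth_on_compose_fst smooth_R that)
    show "0 < R v (fst p) + (1 - R v (fst p)) * exp (-(\<epsilon> * snd p))" if "p \<in> S \<times> T" for p
      using that R_nonneg R_le_1 by (intro soft_ln_arg_pos) auto
  qed
  show ?thesis
    unfolding chi_def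
  proof (intro smooth_on_add smooth_on_mult smooth_on_sum smooth_on_diff smooth_on_const
      smooth_on_snd finite_cells weight)
    fix F v assume "F \<in> cells" "v \<in> F"
    then show "smooth_on (S \<times> T) (\<lambda>p. soft_ln \<epsilon> (snd p) (R v (fst p)))"
      by (intro soft) blast
  qed (use finite_cell in auto)
qed

lemma log_ratio_eq_average:
  "\<gamma> * l \<omega> - chi \<epsilon> s \<gamma> \<omega> = (\<Sum>F\<in>cells. cell_weight F s \<gamma> * cell_exponent \<epsilon> s \<gamma> \<omega> F)"
proof -
  have "(\<Sum>F\<in>cells. cell_weight F s \<gamma> * cell_exponent \<epsilon> s \<gamma> \<omega> F) =
      (\<Sum>F\<in>cells. cell_weight F s \<gamma> * (\<gamma> * (l \<omega> - l 0))) - (chi \<epsilon> s \<gamma> \<omega> - \<gamma> * l 0)"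
    by (simp add: chi_def cell_exponent_def algebra_simps sum_subtractf sum.distrib)
  also have "(\<Sum>F\<in>cells. cell_weight F s \<gamma> * (\<gamma> * (l \<omega> - l 0))) = \<gamma> * (l \<omega> - l 0)"
    by (simp add: sum_cell_weight flip: sum_distrib_right)
  finally show ?thesis by (simp add: algebra_simps)
qed

lemma cell_exponent_on_cell:
  assumes "F \<in> cells" "\<omega> \<in> F"
  shows "cell_exponent \<epsilon> s \<gamma> \<omega> F = soft_ln \<epsilon> \<gamma> (R \<omega> s)"
proof -
  have "(\<Sum>v\<in>F. soft_ln \<epsilon> \<gamma> (R v s) * (dual F v \<bullet> \<omega>)) =
      (\<Sum>v\<in>F. if v = \<omega> then soft_ln \<epsilon> \<gamma> (R v s) else 0)"
    using assms by (intro sum.cong) (auto simp: dual_basis)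
  also have "\<dots> = soft_ln \<epsilon> \<gamma> (R \<omega> s)" using assms finite_cell by simp
  finally show ?thesis using assms by (simp add: cell_exponent_def slope_on_cell)
qed

lemma cell_exponent_off_cell:
  assumes "F \<in> cells" "s \<in> S" "0 \<le> \<epsilon>" "0 \<le> \<gamma>"
    and gap: "l \<omega> - l 0 + \<delta> \<le> slope F \<bullet> \<omega>" and "\<epsilon> * (B + 1) \<le> \<delta>"
    and B: "(\<Sum>v\<in>F. \<bar>dual F v \<bullet> \<omega>\<bar>) \<le> B" and M: "\<bar>l \<omega> - l 0 - slope F \<bullet> \<omega>\<bar> \<le> M"
  shows "-(\<gamma> * (M + \<epsilon> * B)) \<le> cell_exponent \<epsilon> s \<gamma> \<omega> F" "cell_exponent \<epsilon> s \<gamma> \<omega> F \<le> -(\<epsilon> * \<gamma>)"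
proof -
  have soft: "\<bar>soft_ln \<epsilon> \<gamma> (R v s)\<bar> \<le> \<epsilon> * \<gamma>" for v
    using soft_ln_bounds[of "R v s" \<epsilon> \<gamma>] R_nonneg[OF assms(2)] R_le_1[OF assms(2)] assms(3,4)
    by (simp add: abs_le_iff)
  have "\<bar>\<Sum>v\<in>F. soft_ln \<epsilon> \<gamma> (R v s) * (dual F v \<bullet> \<omega>)\<bar> \<le> (\<Sum>v\<in>F. \<epsilon> * \<gamma> * \<bar>dual F v \<bullet> \<omega>\<bar>)"
    using soft by (intro sum_abs[THEN order_trans] sum_mono) (simp add: abs_mult mult_right_mono)
  also have "\<dots> \<le> \<epsilon> * \<gamma> * B"
    using B assms(3,4) by (simp add: mult_left_mono flip: sum_distrib_left)
  finally have sum: "\<bar>\<Sum>v\<in>F. soft_ln \<epsilon> \<gamma> (R v s) * (dual F v \<bullet> \<omega>)\<bar> \<le> \<epsilon> * \<gamma> * B" .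
  have "\<gamma> * (l \<omega> - l 0 - slope F \<bullet> \<omega>) \<le> \<gamma> * (- (\<epsilon> * (B + 1)))"
    using gap assms(4,6) by (intro mult_left_mono) auto
  with sum show "cell_exponent \<epsilon> s \<gamma> \<omega> F \<le> -(\<epsilon> * \<gamma>)"
    by (simp add: cell_exponent_def algebra_simps)
  have "\<bar>\<gamma> * (l \<omega> - l 0 - slope F \<bullet> \<omega>)\<bar> \<le> \<gamma> * M"
    using M assms(4) by (simp add: abs_mult mult_left_mono)
  with sum show "-(\<gamma> * (M + \<epsilon> * B)) \<le> cell_exponent \<epsilon> s \<gamma> \<omega> F"
    by (simp add: cell_exponent_def algebra_simps)
qed

definition separation_constants :: "real \<Rightarrow> real \<Rightarrow> real \<Rightarrow> bool" where
  "separation_constants \<delta> B M \<longleftrightarrow> 0 < \<delta> \<and> 0 \<le> B \<and> 0 \<le> M \<and>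
     (\<forall>F\<in>cells. \<forall>\<omega>\<in>A.
        (\<omega> \<noteq> 0 \<and> \<omega> \<notin> F \<longrightarrow> l \<omega> - l 0 + \<delta> \<le> slope F \<bullet> \<omega>) \<and>
        (\<Sum>v\<in>F. \<bar>dual F v \<bullet> \<omega>\<bar>) \<le> B \<and> \<bar>l \<omega> - l 0 - slope F \<bullet> \<omega>\<bar> \<le> M)"

lemma ex_separation_constants: "\<exists>\<delta> B M. separation_constants \<delta> B M"
proof -
  define P where "P = {(F, \<omega>) \<in> cells \<times> A. \<omega> \<noteq> 0 \<and> \<omega> \<notin> F}"
  define gap where "gap = (\<lambda>(F, \<omega>). slope F \<bullet> \<omega> - (l \<omega> - l 0))"
  define \<delta> where "\<delta> = Min (insert 1 (gap ` P))"
  have finite_P: "finite P"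
    using finite_cells finite_A by (auto simp: P_def intro: finite_subset[of _ "cells \<times> A"])
  have \<delta>_pos: "0 < \<delta>"
    using finite_P slope_off_cell by (auto simp: \<delta>_def P_def gap_def)
  have \<delta>_gap: "l \<omega> - l 0 + \<delta> \<le> slope F \<bullet> \<omega>" if "(F, \<omega>) \<in> P" for F \<omega>
  proof -
    have "\<delta> \<le> gap (F, \<omega>)" unfolding \<delta>_def using finite_P that by (intro Min_le) auto
    then show ?thesis by (simp add: gap_def)
  qed
  define B where "B = (\<Sum>(F, \<omega>)\<in>cells \<times> A. \<Sum>v\<in>F. \<bar>dual F v \<bullet> \<omega>\<bar>)"
  define M where "M = (\<Sum>(F, \<omega>)\<in>cells \<times> A. \<bar>l \<omega> - l 0 - slope F \<bullet> \<omega>\<bar>)"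
  have B_M: "(\<Sum>v\<in>F. \<bar>dual F v \<bullet> \<omega>\<bar>) \<le> B" "\<bar>l \<omega> - l 0 - slope F \<bullet> \<omega>\<bar> \<le> M"
    if "F \<in> cells" "\<omega> \<in> A" for F \<omega>
    unfolding B_def M_def using that finite_cells finite_A
    by (auto intro!: member_le_sum[of "(F, \<omega>)", where f = "\<lambda>(F, \<omega>). _ F \<omega>", simplified] sum_nonneg)
  have "0 \<le> B" "0 \<le> M" unfolding B_def M_def by (auto intro: sum_nonneg)
  then have "separation_constants \<delta> B M"
    using \<delta>_pos \<delta>_gap B_M unfolding separation_constants_def P_def by auto
  then show ?thesis by blast
qed

lemma cell_exponent_bounds:
  fixes \<delta> B M \<epsilon> \<gamma> :: real
  assumes const: "separation_constants \<delta> B M" and "0 < \<epsilon>" "\<epsilon> * (B + 1) \<le> \<delta>"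
    and "\<omega> \<in> A" "\<omega> \<noteq> 0" "s \<in> S" "0 < \<gamma>" "F \<in> cells"
  shows "soft_ln \<epsilon> \<gamma> (R \<omega> s) - \<gamma> * (M + \<epsilon> * B) \<le> cell_exponent \<epsilon> s \<gamma> \<omega> F \<and>
    cell_exponent \<epsilon> s \<gamma> \<omega> F \<le> soft_ln \<epsilon> \<gamma> (R \<omega> s)"
proof (cases "\<omega> \<in> F")
  case True
  have "0 \<le> M + \<epsilon> * B" using const assms(2) by (simp add: separation_constants_def)
  then show ?thesis using True assms(7,8) by (simp add: cell_exponent_on_cell)
next
  case False
  have "l \<omega> - l 0 + \<delta> \<le> slope F \<bullet> \<omega>" "(\<Sum>v\<in>F. \<bar>dual F v \<bullet> \<omega>\<bar>) \<le> B"
    "\<bar>l \<omega> - l 0 - slope F \<bullet> \<omega>\<bar> \<le> M"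
    using const assms(4,5,8) False unfolding separation_constants_def by auto
  then have "-(\<gamma> * (M + \<epsilon> * B)) \<le> cell_exponent \<epsilon> s \<gamma> \<omega> F"
    "cell_exponent \<epsilon> s \<gamma> \<omega> F \<le> -(\<epsilon> * \<gamma>)"
    using cell_exponent_off_cell[OF assms(8,6) _ _ _ assms(3)] assms(2,7) by auto
  moreover have "-(\<epsilon> * \<gamma>) \<le> soft_ln \<epsilon> \<gamma> (R \<omega> s)" "soft_ln \<epsilon> \<gamma> (R \<omega> s) \<le> 0"
    using soft_ln_bounds R_nonneg R_le_1 assms(2,6,7) by auto
  ultimately show ?thesis by linarith
qed

lemma cell_weight_le_off_cell:
  assumes "s \<in> S" "F \<in> cells" "\<omega> \<in> A" "\<omega> \<noteq> 0" "\<omega> \<notin> F"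
  shows "cell_weight F s \<gamma> \<le> exp (-(\<gamma>\<^sup>2 * R \<omega> s))"
proof -
  have "exp (-(\<gamma>\<^sup>2 * m F s)) \<le> exp (-(\<gamma>\<^sup>2 * R \<omega> s))"
    using R_le_m[OF assms] by (simp add: mult_left_mono)
  then show ?thesis using cell_weight_le[OF assms(1)] order_trans by blast
qed

lemma chi_error_bound:
  fixes \<delta> B M \<epsilon> \<gamma> :: real
  assumes const: "separation_constants \<delta> B M" and "0 < \<epsilon>" "\<epsilon> * (B + 1) \<le> \<delta>"
    and "\<omega> \<in> A" "s \<in> S" "0 < \<gamma>"
  shows "\<bar>exp (\<gamma> * l \<omega> - chi \<epsilon> s \<gamma> \<omega>) - R \<omega> s\<bar>
           \<le> exp (-(\<epsilon> * \<gamma>)) + card cells * (M + \<epsilon> * B) / \<gamma>"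
proof (cases "\<omega> = 0")
  case True
  have "0 \<le> M" "0 \<le> B" using const by (auto simp: separation_constants_def)
  then show ?thesis using True assms by (simp add: chi_omega_zero R_zero)
next
  case False
  define r where "r = R \<omega> s"
  define K where "K = \<gamma> * (M + \<epsilon> * B)"
  define \<eta> where "\<eta> = exp (-(\<gamma>\<^sup>2 * r))"
  have r: "0 \<le> r" "r \<le> 1" using R_nonneg R_le_1 assms(5) by (auto simp: r_def)
  have "0 \<le> K" "0 \<le> \<eta>" using const assms(2,6) by (simp_all add: K_def \<eta>_def separation_constants_def)
  have weight: "cell_weight F s \<gamma> \<le> \<eta>"
    if "F \<in> cells" "cell_exponent \<epsilon> s \<gamma> \<omega> F \<noteq> soft_ln \<epsilon> \<gamma> r" for F
    using that cell_weight_le_off_cell[OF assms(5) _ assms(4) False] cell_exponent_on_cell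
    by (force simp: \<eta>_def r_def)
  note avg = convex_combination_near[where \<theta> = "\<lambda>F. cell_weight F s \<gamma>"
      and L = "cell_exponent \<epsilon> s \<gamma> \<omega>", OF finite_cells cell_weight_nonneg sum_cell_weight
      \<open>0 \<le> \<eta>\<close> cell_exponent_bounds[OF assms(1-4) False assms(5,6), folded r_def K_def] weight]
  have "r \<le> exp (soft_ln \<epsilon> \<gamma> r)" "exp (soft_ln \<epsilon> \<gamma> r) \<le> r + exp (-(\<epsilon> * \<gamma>))"
    using exp_soft_ln[OF r] r by (auto simp: mult_left_le_one_le)
  then have "\<bar>exp (\<gamma> * l \<omega> - chi \<epsilon> s \<gamma> \<omega>) - r\<bar> \<le> exp (-(\<epsilon> * \<gamma>)) + r * (card cells * \<eta> * K)"
    unfolding log_ratio_eq_average using avg r \<open>0 \<le> \<eta>\<close> \<open>0 \<le> K\<close> by (intro exp_near) auto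
  also have "r * (card cells * \<eta> * K) =
      card cells * (M + \<epsilon> * B) / \<gamma> * ((\<gamma>\<^sup>2 * r) * exp (-(\<gamma>\<^sup>2 * r)))"
    using assms(6) by (simp add: \<eta>_def K_def power2_eq_square field_simps)
  also have "\<dots> \<le> card cells * (M + \<epsilon> * B) / \<gamma>"
    using \<open>0 \<le> K\<close> assms(6) mult_exp_neg_le_1
    by (intro mult_left_le) (auto simp: K_def zero_le_mult_iff)
  finally show ?thesis by (simp add: r_def)
qed

lemma chi_uniform_limit:
  fixes \<delta> B M \<epsilon> :: real
  assumes "separation_constants \<delta> B M" "0 < \<epsilon>" "\<epsilon> * (B + 1) \<le> \<delta>" "\<omega> \<in> A"
  shows "uniform_limit S (\<lambda>\<gamma> s. exp (\<gamma> * l \<omega> - chi \<epsilon> s \<gamma> \<omega>)) (R \<omega>) at_top"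
  unfolding uniform_limit_iff
proof (intro allI impI)
  fix e :: real
  assume "0 < e"
  define C where "C = card cells * (M + \<epsilon> * B)"
  have "((\<lambda>\<gamma>. exp (-(\<epsilon> * \<gamma>)) + C / \<gamma>) \<longlongrightarrow> 0) at_top"
    using assms(2) by real_asymp
  then have "\<forall>\<^sub>F \<gamma> in at_top. exp (-(\<epsilon> * \<gamma>)) + C / \<gamma> < e"
    using \<open>0 < e\<close> by (rule order_tendstoD)
  with eventually_gt_at_top[of 0]
  show "\<forall>\<^sub>F \<gamma> in at_top. \<forall>s\<in>S. dist (exp (\<gamma> * l \<omega> - chi \<epsilon> s \<gamma> \<omega>)) (R \<omega> s) < e"
  proof eventually_elim
    case (elim \<gamma>)
    then show ?case
      using chi_error_bound[OF assms(1-4)] by (auto simp: dist_real_def C_def intro: le_less_trans)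
  qed
qed

theorem ex_smoothing_chi:
  "\<exists>chi :: 'b \<Rightarrow> real \<Rightarrow> 'a \<Rightarrow> real.
     (\<forall>\<omega>\<in>A. smooth_on (S \<times> {0..}) (\<lambda>(s, \<gamma>). chi s \<gamma> \<omega>)) \<and>
     (\<forall>s\<in>S. \<forall>\<gamma>\<ge>0. \<exists>a b. \<forall>\<omega>\<in>A. chi s \<gamma> \<omega> = a \<bullet> \<omega> + b) \<and>
     (\<forall>s\<in>S. \<forall>\<omega>\<in>A. chi s 0 \<omega> = 0) \<and>
     (\<forall>s\<in>S. \<forall>\<gamma>\<ge>0. chi s \<gamma> 0 = \<gamma> * l 0) \<and>
     (\<forall>\<omega>\<in>A. uniform_limit S (\<lambda>\<gamma> s. exp (\<gamma> * l \<omega> - chi s \<gamma> \<omega>)) (R \<omega>) at_top)"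
proof -
  obtain \<delta> B M where const: "separation_constants \<delta> B M"
    using ex_separation_constants by blast
  then have "0 < \<delta> / (B + 1)" "\<delta> / (B + 1) * (B + 1) \<le> \<delta>"
    by (auto simp: separation_constants_def)
  then have "\<forall>\<omega>\<in>A. uniform_limit S (\<lambda>\<gamma> s. exp (\<gamma> * l \<omega> - chi (\<delta> / (B + 1)) s \<gamma> \<omega>)) (R \<omega>) at_top"
    using chi_uniform_limit[OF const] by blast
  moreover have "\<exists>a b. \<forall>\<omega>\<in>A. chi (\<delta> / (B + 1)) s \<gamma> \<omega> = a \<bullet> \<omega> + b" for s \<gamma>
    using chi_affine by blast
  ultimately show ?thesis
    using chi_smooth chi_gamma_zero chi_omega_zero
    by (intro exI[of _ "chi (\<delta> / (B + 1))"]) (auto simp: case_prod_unfold)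
qed

end

section \<open>Supporting slopes of the maximal simplices\<close>

lemma convex_strict_hypograph:
  assumes "concave_on D \<psi>"
  shows "convex {(x, t). x \<in> D \<and> t < \<psi> x}"
proof (rule convexI)
  fix p q :: "'a \<times> real" and a b :: real
  assume "p \<in> {(x, t). x \<in> D \<and> t < \<psi> x}" "q \<in> {(x, t). x \<in> D \<and> t < \<psi> x}"
    and ab: "0 \<le> a" "0 \<le> b" "a + b = 1"
  then obtain x1 t1 x2 t2 where pq: "p = (x1, t1)" "q = (x2, t2)"
    and x: "x1 \<in> D" "t1 < \<psi> x1" "x2 \<in> D" "t2 < \<psi> x2"
    by auto
  have "a *\<^sub>R x1 + b *\<^sub>R x2 \<in> D"
    using assms x ab unfolding concave_on_iff convex_def by blast
  moreover have "a * \<psi> x1 + b * \<psi> x2 \<le> \<psi> (a *\<^sub>R x1 + b *\<^sub>R x2)"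
    using assms x ab unfolding concave_on_iff by blast
  moreover have "a * t1 + b * t2 < a * \<psi> x1 + b * \<psi> x2"
  proof (cases "a = 0")
    case False
    then have "a * t1 < a * \<psi> x1" using ab x by simp
    moreover have "b * t2 \<le> b * \<psi> x2" using ab x by (intro mult_left_mono) auto
    ultimately show ?thesis by simp
  qed (use ab x in simp)
  ultimately show "a *\<^sub>R p + b *\<^sub>R q \<in> {(x, t). x \<in> D \<and> t < \<psi> x}"
    by (simp add: pq)
qed

lemma hypograph_normal_pos:
  fixes \<alpha> :: "'a::real_inner"
  assumes x0: "x0 \<in> interior D" and ab: "(\<alpha>, \<beta>) \<noteq> 0"
    and ineq: "\<And>x t. x \<in> D \<Longrightarrow> t < \<psi> x \<Longrightarrow> \<beta> * t \<le> \<alpha> \<bullet> (x0 - x) + \<beta> * \<psi> x0"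
  shows "0 < \<beta>"
proof -
  have "x0 \<in> D" using x0 interior_subset by blast
  have "0 \<le> \<beta>" using ineq[OF \<open>x0 \<in> D\<close>, of "\<psi> x0 - 1"] by (simp add: algebra_simps)
  moreover have "\<beta> \<noteq> 0"
  proof
    assume \<beta>: "\<beta> = 0"
    obtain e where e: "e > 0" "ball x0 e \<subseteq> D" using x0 by (auto simp: mem_interior)
    define \<eta> where "\<eta> = e / (2 * (norm \<alpha> + 1))"
    have "\<eta> > 0" using e by (simp add: \<eta>_def add_nonneg_pos)
    have "norm (\<eta> *\<^sub>R \<alpha>) \<le> \<eta> * (norm \<alpha> + 1)" using \<open>\<eta> > 0\<close> by simp
    also have "\<dots> = e / 2"
      unfolding \<eta>_def by (simp add: divide_simps) (use norm_ge_zero[of \<alpha>] in linarith)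
    also have "\<dots> < e" using e by simp
    finally have "x0 + \<eta> *\<^sub>R \<alpha> \<in> D" using e by (auto simp: dist_norm)
    from ineq[OF this, of "\<psi> (x0 + \<eta> *\<^sub>R \<alpha>) - 1"] \<beta> have "\<eta> * (\<alpha> \<bullet> \<alpha>) \<le> 0"
      by (simp add: inner_diff_right)
    then have "\<alpha> \<bullet> \<alpha> \<le> 0" using \<open>\<eta> > 0\<close> by (simp add: mult_le_0_iff)
    then have "\<alpha> = 0" by (metis inner_gt_zero_iff not_le)
    with \<beta> ab show False by (simp add: zero_prod_def)
  qed
  ultimately show ?thesis by simp
qed

lemma concave_on_supporting_affine:
  fixes \<psi> :: "'a::euclidean_space \<Rightarrow> real"
  assumes conc: "concave_on D \<psi>" and x0: "x0 \<in> interior D"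
  shows "\<exists>u c. (\<forall>x\<in>D. \<psi> x \<le> c + u \<bullet> x) \<and> \<psi> x0 = c + u \<bullet> x0"
proof -
  define K where "K = (+) (x0, \<psi> x0) ` uminus ` {(x, t). x \<in> D \<and> t < \<psi> x}"
  have "convex K"
    unfolding K_def by (intro convex_translation convex_negations convex_strict_hypograph conc)
  moreover have "0 \<notin> K" by (auto simp: K_def zero_prod_def)
  ultimately obtain \<alpha> \<beta> where ab: "(\<alpha>, \<beta>) \<noteq> 0" and sep: "\<forall>z\<in>K. 0 \<le> (\<alpha>, \<beta>) \<bullet> z"
    using separating_hyperplane_set_0 by (metis surj_pair)
  have ineq: "\<beta> * t \<le> \<alpha> \<bullet> (x0 - x) + \<beta> * \<psi> x0" if "x \<in> D" "t < \<psi> x" for x t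
    using sep that by (force simp: K_def inner_diff_right algebra_simps)
  have "0 < \<beta>" using hypograph_normal_pos[where \<psi> = \<psi>, OF x0 ab ineq] .
  define u where "u = - ((1 / \<beta>) *\<^sub>R \<alpha>)"
  define c where "c = \<psi> x0 + (\<alpha> \<bullet> x0) / \<beta>"
  have "\<psi> x \<le> c + u \<bullet> x" if "x \<in> D" for x
  proof (rule ccontr)
    assume above: "\<not> \<psi> x \<le> c + u \<bullet> x"
    define t where "t = (\<psi> x + (c + u \<bullet> x)) / 2"
    have "t < \<psi> x" "c + u \<bullet> x < t" using above by (auto simp: t_def)
    from ineq[OF that this(1)] have "t \<le> (\<alpha> \<bullet> (x0 - x) + \<beta> * \<psi> x0) / \<beta>"
      using \<open>0 < \<beta>\<close> by (simp add: le_divide_eq mult.commute)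
    also have "\<dots> = c + u \<bullet> x"
      using \<open>0 < \<beta>\<close> by (simp add: c_def u_def inner_diff_right field_simps)
    finally show False using \<open>c + u \<bullet> x < t\<close> by simp
  qed
  moreover have "\<psi> x0 = c + u \<bullet> x0" using \<open>0 < \<beta>\<close> by (simp add: c_def u_def)
  ultimately show ?thesis by blast
qed

lemma contact_set_convex:
  assumes "concave_on D \<psi>" "\<And>x. x \<in> D \<Longrightarrow> \<psi> x \<le> c + u \<bullet> x"
  shows "convex {x \<in> D. \<psi> x = c + u \<bullet> x}"
proof (rule convexI)
  fix x y and a b :: real
  assume xy: "x \<in> {x \<in> D. \<psi> x = c + u \<bullet> x}" "y \<in> {x \<in> D. \<psi> x = c + u \<bullet> x}"
    and ab: "0 \<le> a" "0 \<le> b" "a + b = 1"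
  have z: "a *\<^sub>R x + b *\<^sub>R y \<in> D" using assms(1) xy ab unfolding concave_on_iff convex_def by blast
  have "a * \<psi> x + b * \<psi> y \<le> \<psi> (a *\<^sub>R x + b *\<^sub>R y)"
    using assms(1) xy ab unfolding concave_on_iff by blast
  moreover have "a * \<psi> x + b * \<psi> y = c + u \<bullet> (a *\<^sub>R x + b *\<^sub>R y)"
    using xy ab by (simp add: inner_add_right algebra_simps flip: distrib_right)
  ultimately show "a *\<^sub>R x + b *\<^sub>R y \<in> {x \<in> D. \<psi> x = c + u \<bullet> x}"
    using assms(2)[OF z] z by simp
qed

lemma pl_interpolates_at_vertex:
  assumes "pl_interpolates T l h" "S \<in> T" "finite S" "v \<in> S"
  shows "h v = l v"
proof -
  define a where "a w = (if w = v then 1 else 0 :: real)" for w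
  have "\<forall>w\<in>S. 0 \<le> a w" "sum a S = 1" using assms(3,4) by (auto simp: a_def)
  then have "h (\<Sum>w\<in>S. a w *\<^sub>R w) = (\<Sum>w\<in>S. a w * l w)"
    using assms(1,2) unfolding pl_interpolates_def by blast
  moreover have "(\<Sum>w\<in>S. a w *\<^sub>R w) = (\<Sum>w\<in>S. if w = v then w else 0)"
    "(\<Sum>w\<in>S. a w * l w) = (\<Sum>w\<in>S. if w = v then l w else 0)"
    by (auto simp: a_def intro: sum.cong)
  ultimately show ?thesis using assms(3,4) by simp
qed

lemma pl_interpolates_affine_on_hull:
  assumes "pl_interpolates T l h" "S \<in> T" "finite S" "\<And>v. v \<in> S \<Longrightarrow> l v = c + u \<bullet> v"
    and "x \<in> convex hull S"
  shows "h x = c + u \<bullet> x"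
proof -
  obtain a where a: "\<forall>v\<in>S. 0 \<le> a v" "sum a S = 1" "(\<Sum>v\<in>S. a v *\<^sub>R v) = x"
    using assms(3,5) by (auto simp: convex_hull_finite)
  then have "h x = (\<Sum>v\<in>S. a v * l v)"
    using assms(1,2) unfolding pl_interpolates_def by blast
  also have "\<dots> = (\<Sum>v\<in>S. a v * (c + u \<bullet> v))" using assms(4) by (intro sum.cong) auto
  also have "\<dots> = c + u \<bullet> x"
    unfolding a(3)[symmetric] using a(2)
    by (simp add: distrib_left sum.distrib inner_sum_right flip: sum_distrib_right)
  finally show ?thesis .
qed

lemma affine_majorant_eq_on_support:
  fixes a l :: "'a::real_inner \<Rightarrow> real"
  assumes "finite S" "\<And>v. v \<in> S \<Longrightarrow> l v \<le> c + u \<bullet> v" "\<And>v. v \<in> S \<Longrightarrow> 0 < a v"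
    and "sum a S = 1" "(\<Sum>v\<in>S. a v * l v) = c + u \<bullet> (\<Sum>v\<in>S. a v *\<^sub>R v)" "v \<in> S"
  shows "l v = c + u \<bullet> v"
proof -
  have sum_zero: "(\<Sum>v\<in>S. a v * (c + u \<bullet> v - l v)) = 0"
    using assms(4,5)
    by (simp add: right_diff_distrib distrib_left sum.distrib sum_subtractf inner_sum_right
        flip: sum_distrib_right)
  have nonneg: "0 \<le> a w * (c + u \<bullet> w - l w)" if "w \<in> S" for w
    using assms(2,3)[OF that] by simp
  have "a v * (c + u \<bullet> v - l v) = 0"
    using sum_nonneg_eq_0_iff[OF assms(1) nonneg] sum_zero assms(6) by simp
  then show ?thesis using assms(3)[OF assms(6)] by simp
qed

lemma central_simplex_interior_point:
  fixes S :: "'a::euclidean_space set"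
  assumes "convex P" "0 \<in> interior P" "finite S" "S \<subseteq> P" "0 \<in> S"
  shows "\<exists>a. (\<forall>v\<in>S. 0 < a v) \<and> sum a S = 1 \<and> (\<Sum>v\<in>S. a v *\<^sub>R v) \<in> interior P"
proof -
  define n where "n = real (card S)"
  have "S \<noteq> {}" using assms(5) by blast
  then have "0 < n" using assms(3) by (simp add: n_def card_gt_0_iff)
  define b where "b = (\<Sum>v\<in>S. (1 / n) *\<^sub>R v)"
  define a where "a v = 1 / (2 * n) + (if v = 0 then 1 / 2 else 0)" for v :: 'a
  have pos: "0 < a v" for v using \<open>0 < n\<close> by (simp add: a_def add_pos_nonneg)
  have sum: "sum a S = 1"
    using assms(3,5) \<open>S \<noteq> {}\<close> by (simp add: a_def sum.distrib n_def)
  have "(\<Sum>v\<in>S. (if v = 0 then 1 / 2 else 0) *\<^sub>R v) = 0"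
    by (intro sum.neutral) auto
  then have "(\<Sum>v\<in>S. a v *\<^sub>R v) = (1 - 1 / 2) *\<^sub>R b"
    by (simp add: a_def b_def scaleR_add_left sum.distrib scaleR_sum_right)
  also have "\<dots> = b - (1 / 2) *\<^sub>R (b - 0)"
    by (simp only: diff_zero scaleR_diff_left scaleR_one)
  also have "\<dots> \<in> interior P"
    using assms \<open>0 < n\<close> unfolding b_def
    by (intro mem_interior_convex_shrink convex_sum) (auto simp: n_def)
  finally show ?thesis using pos sum by blast
qed

lemma triangulation_vertex_in_hull_imp_mem:
  assumes "triangulation T P A" "\<omega> \<in> tri_vertices T" "S \<in> T" "\<omega> \<in> convex hull S"
  shows "\<omega> \<in> S"
proof -
  obtain X where "X \<in> T" "\<omega> \<in> X" using assms(2) by (auto simp: tri_vertices_def)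
  then have "{\<omega>} \<in> T" using assms(1) unfolding triangulation_def by blast
  then have "convex hull {\<omega>} \<inter> convex hull S = convex hull ({\<omega>} \<inter> S)"
    using assms(1,3) unfolding triangulation_def by blast
  then show ?thesis using assms(4) by (cases "\<omega> \<in> S") auto
qed

lemma max_linearity_domain_eq_contact_set:
  assumes "concave_on D \<psi>" "\<And>x. x \<in> D \<Longrightarrow> \<psi> x \<le> c + u \<bullet> x" "max_linearity_domain D \<psi> C"
    and "C \<subseteq> {x \<in> D. \<psi> x = c + u \<bullet> x}"
  shows "{x \<in> D. \<psi> x = c + u \<bullet> x} = C"
proof -
  have "affine_on {x \<in> D. \<psi> x = c + u \<bullet> x} \<psi>"
    unfolding affine_on_def by (rule exI[of _ u], rule exI[of _ c]) (simp add: add.commute)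
  then show ?thesis
    using assms contact_set_convex[OF assms(1,2)] unfolding max_linearity_domain_def by blast
qed

lemma contact_vertex_in_max_simplex:
  assumes tri: "triangulation T \<Delta> A" and interp: "pl_interpolates T l \<psi>"
    and conc: "concave_on \<Delta> \<psi>" and dom: "linearity_domains_are_max_simplices T \<Delta> \<psi>"
    and S: "max_simplex T S" "finite S" "S \<subseteq> \<Delta>"
    and sup: "\<And>x. x \<in> \<Delta> \<Longrightarrow> \<psi> x \<le> c + u \<bullet> x" and on_S: "\<And>v. v \<in> S \<Longrightarrow> l v = c + u \<bullet> v"
    and \<omega>: "\<omega> \<in> \<Delta>" "\<psi> \<omega> = c + u \<bullet> \<omega>" "\<omega> \<in> tri_vertices T"
  shows "\<omega> \<in> S"
proof -
  have "S \<in> T" using S(1) by (simp add: max_simplex_def)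
  have "convex \<Delta>" using conc by (simp add: concave_on_iff)
  then have "convex hull S \<subseteq> {x \<in> \<Delta>. \<psi> x = c + u \<bullet> x}"
    using pl_interpolates_affine_on_hull[OF interp \<open>S \<in> T\<close> S(2) on_S]
      hull_minimal[of S \<Delta> convex] S(3) by auto
  then have "{x \<in> \<Delta>. \<psi> x = c + u \<bullet> x} = convex hull S"
    using max_linearity_domain_eq_contact_set[OF conc sup] S(1) dom
    unfolding linearity_domains_are_max_simplices_def by blast
  then show ?thesis
    using \<omega> triangulation_vertex_in_hull_imp_mem[OF tri _ \<open>S \<in> T\<close>] by blast
qed

lemma max_simplex_slope:
  fixes \<Delta> A :: "(real^'n) set" and l \<psi> :: "real^'n \<Rightarrow> real"
  assumes A: "finite A" "A \<subseteq> \<Delta>" and tri: "triangulation T \<Delta> A" and "central T"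
    and interp: "pl_interpolates T l \<psi>" and conc: "concave_on \<Delta> \<psi>"
    and dom: "linearity_domains_are_max_simplices T \<Delta> \<psi>"
    and below: "\<And>\<omega>. \<omega> \<in> A \<Longrightarrow> l \<omega> \<le> \<psi> \<omega>"
    and touch: "\<And>\<omega>. \<omega> \<in> A \<Longrightarrow> \<psi> \<omega> = l \<omega> \<longleftrightarrow> \<omega> \<in> tri_vertices T"
    and "0 \<in> interior \<Delta>" and S: "max_simplex T S"
  shows "\<exists>u. (\<forall>v\<in>S. u \<bullet> v = l v - l 0) \<and> (\<forall>\<omega>\<in>A. \<omega> \<notin> S \<longrightarrow> l \<omega> - l 0 < u \<bullet> \<omega>)"
proof -
  have "S \<in> T" using S by (simp add: max_simplex_def)
  then have "S \<subseteq> A" using tri by (simp add: triangulation_def)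
  then have "finite S" "S \<subseteq> \<Delta>" using A finite_subset by auto
  have "0 \<in> S" using \<open>central T\<close> S by (simp add: central_def)
  have "convex \<Delta>" using conc by (simp add: concave_on_iff)
  obtain a where a: "\<forall>v\<in>S. 0 < a v" "sum a S = 1" "(\<Sum>v\<in>S. a v *\<^sub>R v) \<in> interior \<Delta>"
    using central_simplex_interior_point[OF \<open>convex \<Delta>\<close> \<open>0 \<in> interior \<Delta>\<close> \<open>finite S\<close>
        \<open>S \<subseteq> \<Delta>\<close> \<open>0 \<in> S\<close>] by blast
  obtain u c where sup: "\<forall>x\<in>\<Delta>. \<psi> x \<le> c + u \<bullet> x"
    and eq: "\<psi> (\<Sum>v\<in>S. a v *\<^sub>R v) = c + u \<bullet> (\<Sum>v\<in>S. a v *\<^sub>R v)"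
    using concave_on_supporting_affine[OF conc a(3)] by blast
  have "(\<Sum>v\<in>S. a v * l v) = c + u \<bullet> (\<Sum>v\<in>S. a v *\<^sub>R v)"
    using interp \<open>S \<in> T\<close> a eq unfolding pl_interpolates_def by (simp add: less_imp_le)
  moreover have "l v \<le> c + u \<bullet> v" if "v \<in> S" for v
    using sup pl_interpolates_at_vertex[OF interp \<open>S \<in> T\<close> \<open>finite S\<close> that] that \<open>S \<subseteq> \<Delta>\<close>
    by (metis subsetD)
  ultimately have on_S: "l v = c + u \<bullet> v" if "v \<in> S" for v
    using affine_majorant_eq_on_support[OF \<open>finite S\<close>] a(1,2) that by blast
  have "l \<omega> - l 0 < u \<bullet> \<omega>" if \<omega>: "\<omega> \<in> A" "\<omega> \<notin> S" for \<omega>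
  proof (rule ccontr)
    assume "\<not> l \<omega> - l 0 < u \<bullet> \<omega>"
    then have "\<psi> \<omega> = l \<omega>" "\<psi> \<omega> = c + u \<bullet> \<omega>"
      using on_S[OF \<open>0 \<in> S\<close>] sup below[OF \<omega>(1)] \<omega>(1) A(2) by force+
    then show False
      using contact_vertex_in_max_simplex[OF tri interp conc dom S \<open>finite S\<close> \<open>S \<subseteq> \<Delta>\<close> _ on_S]
        touch sup \<omega> A(2) by blast
  qed
  moreover have "u \<bullet> v = l v - l 0" if "v \<in> S" for v
    using on_S[OF that] on_S[OF \<open>0 \<in> S\<close>] by simp
  ultimately show ?thesis by blast
qed

section \<open>Cells and the boundary partition of unity\<close>

definition punctured_max_simplices :: "(real^'n) set set \<Rightarrow> (real^'n) set set" where
  "punctured_max_simplices T = (\<lambda>S. S - {0}) ` {S. max_simplex T S}"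

definition uncovered_mass :: "'a set set \<Rightarrow> ('a set \<Rightarrow> 'b \<Rightarrow> real) \<Rightarrow> 'a set \<Rightarrow> 'b \<Rightarrow> real" where
  "uncovered_mass K r F s = (\<Sum>\<tau>\<in>{\<tau>\<in>K. \<not> \<tau> \<subseteq> F}. r \<tau> s)"

lemma exists_max_simplex: "finite T \<Longrightarrow> X \<in> T \<Longrightarrow> \<exists>S. max_simplex T S \<and> X \<subseteq> S"
  using finite_has_maximal2[of T X] by (auto simp: max_simplex_def)

lemma finite_punctured_max_simplices:
  "triangulation T P A \<Longrightarrow> finite (punctured_max_simplices T)"
  unfolding punctured_max_simplices_def triangulation_def max_simplex_def by auto

lemma punctured_max_simplices_nonempty:
  assumes "triangulation T P A" "P \<noteq> {}"
  shows "punctured_max_simplices T \<noteq> {}"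
proof -
  have "\<Union>((\<lambda>S. convex hull S) ` T) = P" using assms(1) by (simp add: triangulation_def)
  with assms(2) obtain X where "X \<in> T" by blast
  moreover have "finite T" using assms(1) by (simp add: triangulation_def)
  ultimately obtain S where "max_simplex T S" using exists_max_simplex by blast
  then show ?thesis by (auto simp: punctured_max_simplices_def)
qed

lemma finite_punctured_max_simplex:
  "triangulation T P A \<Longrightarrow> finite A \<Longrightarrow> F \<in> punctured_max_simplices T \<Longrightarrow> finite F"
  unfolding punctured_max_simplices_def triangulation_def max_simplex_def
  by (auto intro: finite_subset)

lemma independent_punctured_max_simplex:
  assumes "triangulation T P A" "central T" "F \<in> punctured_max_simplices T"
  shows "independent F"
proof -
  obtain S where S: "max_simplex T S" "F = S - {0}"
    using assms(3) by (auto simp: punctured_max_simplices_def)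
  then have "S = insert 0 F" using assms(2) by (auto simp: central_def)
  moreover have "\<not> affine_dependent S"
    using assms(1) S(1) by (simp add: triangulation_def max_simplex_def)
  ultimately show ?thesis
    using affine_dependent_iff_dependent[of 0 F] S(2) by simp
qed

lemma ex_dual_vector:
  fixes F :: "'a::euclidean_space set"
  assumes "independent F" "v \<in> F"
  shows "\<exists>y. \<forall>w\<in>F. y \<bullet> w = (if v = w then 1 else 0)"
proof -
  obtain g :: "'a \<Rightarrow> real" where g: "linear g" "\<forall>x\<in>F. g x = (if v = x then 1 else 0)"
    using linear_independent_extend[OF assms(1), of "\<lambda>x. if v = x then 1 else 0"] by auto
  have "g x = (\<Sum>b\<in>Basis. g b *\<^sub>R b) \<bullet> x" for x
  proof -
    have "g x = g (\<Sum>b\<in>Basis. (x \<bullet> b) *\<^sub>R b)" by (simp only: euclidean_representation)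
    also have "\<dots> = (\<Sum>b\<in>Basis. (x \<bullet> b) * g b)"
      by (simp add: linear_sum[OF g(1)] linear_scale[OF g(1)])
    also have "\<dots> = (\<Sum>b\<in>Basis. g b *\<^sub>R b) \<bullet> x"
      unfolding inner_sum_left by (intro sum.cong refl) (simp add: inner_commute)
    finally show ?thesis .
  qed
  then have "\<forall>w\<in>F. (\<Sum>b\<in>Basis. g b *\<^sub>R b) \<bullet> w = (if v = w then 1 else 0)"
    using g(2) by metis
  then show ?thesis by blast
qed

lemma ex_dual_bases:
  fixes \<F> :: "'a::euclidean_space set set"
  assumes "\<And>F. F \<in> \<F> \<Longrightarrow> independent F"
  shows "\<exists>d. \<forall>F\<in>\<F>. \<forall>v\<in>F. \<forall>w\<in>F. d F v \<bullet> w = (if v = w then 1 else 0)"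
  using ex_dual_vector[OF assms] by metis

lemma ex_punctured_max_simplex_slopes:
  fixes \<Delta> A :: "(real^'n) set" and l \<psi> :: "real^'n \<Rightarrow> real"
  assumes "finite A" "A \<subseteq> \<Delta>" "triangulation T \<Delta> A" "central T"
    and "pl_interpolates T l \<psi>" "concave_on \<Delta> \<psi>" "linearity_domains_are_max_simplices T \<Delta> \<psi>"
    and "\<And>\<omega>. \<omega> \<in> A \<Longrightarrow> l \<omega> \<le> \<psi> \<omega>"
    and "\<And>\<omega>. \<omega> \<in> A \<Longrightarrow> \<psi> \<omega> = l \<omega> \<longleftrightarrow> \<omega> \<in> tri_vertices T"
    and "0 \<in> interior \<Delta>"
  shows "\<exists>slope. \<forall>F\<in>punctured_max_simplices T. (\<forall>v\<in>F. slope F \<bullet> v = l v - l 0) \<and>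
           (\<forall>\<omega>\<in>A. \<omega> \<noteq> 0 \<and> \<omega> \<notin> F \<longrightarrow> l \<omega> - l 0 < slope F \<bullet> \<omega>)"
proof -
  have "\<exists>u. (\<forall>v\<in>F. u \<bullet> v = l v - l 0) \<and> (\<forall>\<omega>\<in>A. \<omega> \<noteq> 0 \<and> \<omega> \<notin> F \<longrightarrow> l \<omega> - l 0 < u \<bullet> \<omega>)"
    if F: "F \<in> punctured_max_simplices T" for F
  proof -
    obtain S where S: "max_simplex T S" "F = S - {0}"
      using F by (auto simp: punctured_max_simplices_def)
    show ?thesis using max_simplex_slope[OF assms S(1)] S(2) by auto
  qed
  then show ?thesis by metis
qed

lemma rho_bounds:
  assumes "finite (boundary_tri T P)" "\<And>\<tau>. \<tau> \<in> boundary_tri T P \<Longrightarrow> 0 \<le> r \<tau> s"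
    and "(\<Sum>\<tau>\<in>boundary_tri T P. r \<tau> s) = 1"
  shows "0 \<le> rho T P r v s" "rho T P r v s \<le> 1"
proof -
  have "(\<Sum>\<tau>\<in>{\<tau>\<in>boundary_tri T P. v \<in> \<tau>}. r \<tau> s) \<le> (\<Sum>\<tau>\<in>boundary_tri T P. r \<tau> s)"
    using assms(1,2) by (intro sum_mono2) auto
  moreover have "0 \<le> (\<Sum>\<tau>\<in>{\<tau>\<in>boundary_tri T P. v \<in> \<tau>}. r \<tau> s)"
    using assms(2) by (intro sum_nonneg) auto
  ultimately show "0 \<le> rho T P r v s" "rho T P r v s \<le> 1"
    using assms(3) by (auto simp: rho_def)
qed

lemma rho_le_uncovered_mass:
  assumes "finite (boundary_tri T P)" "\<And>\<tau>. \<tau> \<in> boundary_tri T P \<Longrightarrow> 0 \<le> r \<tau> s"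
    and "v \<noteq> 0" "v \<notin> F"
  shows "rho T P r v s \<le> uncovered_mass (boundary_tri T P) r F s"
proof -
  have "(\<Sum>\<tau>\<in>{\<tau>\<in>boundary_tri T P. v \<in> \<tau>}. r \<tau> s) \<le> uncovered_mass (boundary_tri T P) r F s"
    unfolding uncovered_mass_def using assms by (intro sum_mono2) auto
  moreover have "0 \<le> uncovered_mass (boundary_tri T P) r F s"
    unfolding uncovered_mass_def using assms(2) by (intro sum_nonneg) auto
  ultimately show ?thesis using assms(3) by (auto simp: rho_def)
qed

text \<open>The partition functions that do not vanish at \<open>s\<close> are indexed by a chain of boundary
  simplices, so they all lie in one maximal simplex.\<close>
lemma uncovered_mass_vanishes:
  assumes tri: "triangulation T P A" and "0 \<in> interior P" "s \<in> frontier P"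
    and meet: "\<And>\<tau> \<tau>'. \<tau> \<in> boundary_tri T P \<Longrightarrow> \<tau>' \<in> boundary_tri T P \<Longrightarrow>
      V \<tau> \<inter> V \<tau>' \<noteq> {} \<longleftrightarrow> \<tau> \<subseteq> \<tau>' \<or> \<tau>' \<subseteq> \<tau>"
    and supp: "\<And>\<tau>. \<tau> \<in> boundary_tri T P \<Longrightarrow> closure {s \<in> frontier P. r \<tau> s \<noteq> 0} \<subseteq> V \<tau>"
  shows "\<exists>G\<in>punctured_max_simplices T. uncovered_mass (boundary_tri T P) r G s = 0"
proof -
  define C where "C = {\<tau>\<in>boundary_tri T P. r \<tau> s \<noteq> 0}"
  have "finite T" using tri by (simp add: triangulation_def)
  then have "finite C" by (auto simp: C_def boundary_tri_def)
  have "s \<in> V \<tau>" if "\<tau> \<in> C" for \<tau>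
    using that supp closure_subset \<open>s \<in> frontier P\<close> by (fastforce simp: C_def)
  then have "subset.chain (boundary_tri T P) C"
    using meet unfolding subset_chain_def C_def by blast
  have "\<exists>X\<in>T. \<Union>C \<subseteq> X"
  proof (cases "C = {}")
    case True
    have "\<Union>((\<lambda>S. convex hull S) ` T) = P" using tri by (simp add: triangulation_def)
    with \<open>0 \<in> interior P\<close> interior_subset obtain X where "X \<in> T" by blast
    with True show ?thesis by blast
  next
    case False
    then have "\<Union>C \<in> C" using Union_in_chain \<open>finite C\<close> \<open>subset.chain _ C\<close> by blast
    then show ?thesis by (auto simp: C_def boundary_tri_def)
  qed
  then obtain S where S: "max_simplex T S" "\<Union>C \<subseteq> S"
    using exists_max_simplex[OF \<open>finite T\<close>] by blast
  have "0 \<notin> \<tau>" if "\<tau> \<in> boundary_tri T P" for \<tau>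
    using that hull_subset[of \<tau> convex] \<open>0 \<in> interior P\<close>
    by (auto simp: boundary_tri_def frontier_def)
  then have "\<tau> \<subseteq> S - {0}" if "\<tau> \<in> C" for \<tau>
    using that S(2) by (auto simp: C_def)
  then have "uncovered_mass (boundary_tri T P) r (S - {0}) s = 0"
    unfolding uncovered_mass_def by (intro sum.neutral) (auto simp: C_def)
  then show ?thesis using S(1) by (auto simp: punctured_max_simplices_def)
qed

lemma smooth_on_uncovered_mass:
  "finite K \<Longrightarrow> (\<And>\<tau>. \<tau> \<in> K \<Longrightarrow> smooth_on X (r \<tau>)) \<Longrightarrow> smooth_on X (uncovered_mass K r F)"
  unfolding uncovered_mass_def[abs_def] by (intro smooth_on_sum) auto

lemma smooth_on_rho:
  assumes "finite (boundary_tri T P)" "\<And>\<tau>. \<tau> \<in> boundary_tri T P \<Longrightarrow> smooth_on X (r \<tau>)"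
  shows "smooth_on X (rho T P r v)"
proof -
  have "rho T P r v = (if v = 0 then (\<lambda>s. 1) else if v \<in> tri_vertices (boundary_tri T P)
      then (\<lambda>s. \<Sum>\<tau>\<in>{\<tau>\<in>boundary_tri T P. v \<in> \<tau>}. r \<tau> s) else (\<lambda>s. 0))"
    by (auto simp: rho_def)
  then show ?thesis using assms by (auto intro!: smooth_on_sum smooth_on_const)
qed

lemma cell_smoothing_boundary:
  fixes \<Delta> A :: "(real^'n) set" and T :: "(real^'n) set set"
  assumes A_fin: "finite A" and tri: "triangulation T \<Delta> A" and cent: "central T"
    and int0: "0 \<in> interior \<Delta>"
    and slope: "\<forall>F\<in>punctured_max_simplices T. (\<forall>v\<in>F. slope F \<bullet> v = l v - l 0) \<and>
      (\<forall>\<omega>\<in>A. \<omega> \<noteq> 0 \<and> \<omega> \<notin> F \<longrightarrow> l \<omega> - l 0 < slope F \<bullet> \<omega>)"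
    and dual: "\<forall>F\<in>punctured_max_simplices T. \<forall>v\<in>F. \<forall>w\<in>F. dual F v \<bullet> w = (if v = w then 1 else 0)"
    and V_meet: "\<And>\<tau> \<tau>'. \<tau> \<in> boundary_tri T \<Delta> \<Longrightarrow> \<tau>' \<in> boundary_tri T \<Delta> \<Longrightarrow>
      V \<tau> \<inter> V \<tau>' \<noteq> {} \<longleftrightarrow> \<tau> \<subseteq> \<tau>' \<or> \<tau>' \<subseteq> \<tau>"
    and rho0_smooth: "\<And>\<tau>. \<tau> \<in> boundary_tri T \<Delta> \<Longrightarrow> smooth_on (frontier \<Delta>) (rho0 \<tau>)"
    and rho0_nonneg: "\<And>\<tau> s. \<tau> \<in> boundary_tri T \<Delta> \<Longrightarrow> s \<in> frontier \<Delta> \<Longrightarrow> 0 \<le> rho0 \<tau> s"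
    and rho0_supp: "\<And>\<tau>. \<tau> \<in> boundary_tri T \<Delta> \<Longrightarrow>
      closure {s \<in> frontier \<Delta>. rho0 \<tau> s \<noteq> 0} \<subseteq> V \<tau>"
    and rho0_sum: "\<And>s. s \<in> frontier \<Delta> \<Longrightarrow> (\<Sum>\<tau>\<in>boundary_tri T \<Delta>. rho0 \<tau> s) = 1"
  shows "cell_smoothing (frontier \<Delta>) A (punctured_max_simplices T) slope dual l
    (uncovered_mass (boundary_tri T \<Delta>) rho0) (rho T \<Delta> rho0)"
proof -
  have finite_K: "finite (boundary_tri T \<Delta>)"
    using tri by (simp add: triangulation_def boundary_tri_def)
  have "\<Delta> \<noteq> {}" using int0 interior_subset by blast
  show ?thesis
  proof
    show "finite (punctured_max_simplices T)"
      using tri by (rule finite_punctured_max_simplices)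
    show "punctured_max_simplices T \<noteq> {}"
      using tri \<open>\<Delta> \<noteq> {}\<close> by (rule punctured_max_simplices_nonempty)
    show "finite F" if "F \<in> punctured_max_simplices T" for F
      using finite_punctured_max_simplex[OF tri A_fin that] .
    show "smooth_on (frontier \<Delta>) (uncovered_mass (boundary_tri T \<Delta>) rho0 F)" for F
      using finite_K rho0_smooth by (rule smooth_on_uncovered_mass)
    show "smooth_on (frontier \<Delta>) (rho T \<Delta> rho0 v)" for v
      using finite_K rho0_smooth by (rule smooth_on_rho)
    show "0 \<le> rho T \<Delta> rho0 v s" "rho T \<Delta> rho0 v s \<le> 1" if "s \<in> frontier \<Delta>" for v s
      using rho_bounds[OF finite_K] rho0_nonneg rho0_sum that by auto
    show "rho T \<Delta> rho0 v s \<le> uncovered_mass (boundary_tri T \<Delta>) rho0 F s"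
      if "s \<in> frontier \<Delta>" "v \<noteq> 0" "v \<notin> F" for v s F
      using rho_le_uncovered_mass[OF finite_K] rho0_nonneg that by auto
    show "\<exists>G\<in>punctured_max_simplices T. uncovered_mass (boundary_tri T \<Delta>) rho0 G s = 0"
      if "s \<in> frontier \<Delta>" for s
      using uncovered_mass_vanishes[OF tri int0 that V_meet rho0_supp] by blast
  qed (use A_fin slope dual in \<open>auto simp: rho_def\<close>)
qed

theorem lemma3p4:
  fixes \<Delta> A :: "(real^'n) set"
    and T :: "(real^'n) set set"
    and lam :: "real^'n \<Rightarrow> int"
    and \<psi> :: "real^'n \<Rightarrow> real"
    and V :: "(real^'n) set \<Rightarrow> (real^'n) set"
    and rho0 :: "(real^'n) set \<Rightarrow> real^'n \<Rightarrow> real"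
  assumes refl: "reflexive_polytope \<Delta>"
    and nonsing: "nonsingular_polytope \<Delta>"
    and A_fin: "finite A"
    and A_sub: "A \<subseteq> \<Delta> \<inter> {x. lattice_point x}"
    and A_0: "0 \<in> A"
    and A_vert: "\<And>v. v extreme_point_of \<Delta> \<Longrightarrow> v \<in> A"
    and tri: "triangulation T \<Delta> A"
    and coh: "coherent T \<Delta>"
    and cent: "central T"
    and psi_interp: "pl_interpolates T (\<lambda>v. real_of_int (lam v)) \<psi>"
    and psi_conv: "concave_on \<Delta> \<psi>"
    and psi_dom: "linearity_domains_are_max_simplices T \<Delta> \<psi>"
    and psi_ge: "\<And>\<omega>. \<omega> \<in> A \<Longrightarrow> \<psi> \<omega> \<ge> real_of_int (lam \<omega>)"
    and psi_eq: "\<And>\<omega>. \<omega> \<in> A \<Longrightarrow> \<psi> \<omega> = real_of_int (lam \<omega>) \<longleftrightarrow> \<omega> \<in> tri_vertices T"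
    and V_open: "\<And>\<tau>. \<tau> \<in> boundary_tri T \<Delta> \<Longrightarrow> openin (top_of_set (frontier \<Delta>)) (V \<tau>)"
    and V_V0: "\<And>\<tau>. \<tau> \<in> boundary_tri T \<Delta> \<Longrightarrow> V0 T \<Delta> \<tau> \<subseteq> V \<tau>"
    and V_meet: "\<And>\<tau> \<tau>'. \<tau> \<in> boundary_tri T \<Delta> \<Longrightarrow> \<tau>' \<in> boundary_tri T \<Delta> \<Longrightarrow>
                   V \<tau> \<inter> V \<tau>' \<noteq> {} \<longleftrightarrow> \<tau> \<subseteq> \<tau>' \<or> \<tau>' \<subseteq> \<tau>"
    and rho0_smooth: "\<And>\<tau>. \<tau> \<in> boundary_tri T \<Delta> \<Longrightarrow> smooth_on (frontier \<Delta>) (rho0 \<tau>)"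
    and rho0_nonneg: "\<And>\<tau> s. \<tau> \<in> boundary_tri T \<Delta> \<Longrightarrow> s \<in> frontier \<Delta> \<Longrightarrow> 0 \<le> rho0 \<tau> s"
    and rho0_supp: "\<And>\<tau>. \<tau> \<in> boundary_tri T \<Delta> \<Longrightarrow>
                     closure {s \<in> frontier \<Delta>. rho0 \<tau> s \<noteq> 0} \<subseteq> V \<tau>"
    and rho0_sum: "\<And>s. s \<in> frontier \<Delta> \<Longrightarrow> (\<Sum>\<tau>\<in>boundary_tri T \<Delta>. rho0 \<tau> s) = 1"
  shows "\<exists>(chi :: real^'n \<Rightarrow> real \<Rightarrow> real^'n \<Rightarrow> real).
     (\<forall>\<omega>\<in>A. smooth_on (frontier \<Delta> \<times> {0..}) (\<lambda>(s, \<gamma>). chi s \<gamma> \<omega>)) \<and>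
     (\<forall>s\<in>frontier \<Delta>. \<forall>\<gamma>\<ge>0. \<exists>a b. \<forall>\<omega>\<in>A. chi s \<gamma> \<omega> = a \<bullet> \<omega> + b) \<and>
     (\<forall>s\<in>frontier \<Delta>. \<forall>\<omega>\<in>A. chi s 0 \<omega> = 0) \<and>
     (\<forall>s\<in>frontier \<Delta>. \<forall>\<gamma>\<ge>0. chi s \<gamma> 0 = \<gamma> * real_of_int (lam 0)) \<and>
     (\<forall>\<omega>\<in>A. uniform_limit (frontier \<Delta>)
         (\<lambda>\<gamma> s. exp (\<gamma> * real_of_int (lam \<omega>) - chi s \<gamma> \<omega>))
         (\<lambda>s. rho T \<Delta> rho0 \<omega> s) at_top)"
proof -
  have int0: "0 \<in> interior \<Delta>" using refl by (simp add: reflexive_polytope_def)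
  obtain slope where slope: "\<forall>F\<in>punctured_max_simplices T.
      (\<forall>v\<in>F. slope F \<bullet> v = real_of_int (lam v) - real_of_int (lam 0)) \<and>
      (\<forall>\<omega>\<in>A. \<omega> \<noteq> 0 \<and> \<omega> \<notin> F \<longrightarrow> real_of_int (lam \<omega>) - real_of_int (lam 0) < slope F \<bullet> \<omega>)"
    using ex_punctured_max_simplex_slopes[OF A_fin _ tri cent psi_interp psi_conv psi_dom psi_ge
        psi_eq int0] A_sub by blast
  obtain dual where "\<forall>F\<in>punctured_max_simplices T. \<forall>v\<in>F. \<forall>w\<in>F.
      dual F v \<bullet> w = (if v = w then 1 else 0)"
    using ex_dual_bases[OF independent_punctured_max_simplex[OF tri cent]] by blast
  then have "cell_smoothing (frontier \<Delta>) A (punctured_max_simplices T) slope dual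
      (\<lambda>v. real_of_int (lam v)) (uncovered_mass (boundary_tri T \<Delta>) rho0) (rho T \<Delta> rho0)"
    using cell_smoothing_boundary[OF A_fin tri cent int0 slope _ V_meet rho0_smooth rho0_nonneg
        rho0_supp rho0_sum] by blast
  then show ?thesis by (rule cell_smoothing.ex_smoothing_chi)
qed

end
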